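(* Let $V$ be a finite-dimensional vector space over an algebraically closed field $k$, let $G = \mathrm{GL}(V)$, and let $H$ and $K$ be subgroups of $G$, with $K$ reductive, which both preserve a direct-sum decomposition $V = \bigoplus_{i=1}^n V_i$. Suppose also that $K = K_1 \times \cdots \times K_n$ where $K_i \le \mathrm{GL}(V_i)$ for each $i$ (with $K_i$ regarded as a subgroup of $G$ acting trivially on $V_j$ for $j\neq i$). Then $H$ is relatively $G$-completely reducible with respect to $K$ if and only if $H$ is relatively $G$-completely reducible with respect to $K_i$ for all $i$.
   Context: For a cocharacter $\lambda$ of $G$, $P_\lambda = \{g \in G \mid \lim_{a\to 0}\lambda(a)g\lambda(a)^{-1} \text{ exists}\}$ and $L_\lambda = \{g \in G \mid \lim_{a\to 0}\lambda(a)g\lambda(a)^{-1} = g\}$. For a reductive subgroup $M$ of $G$, $H$ is relatively $G$-completely reducible with respect to $M$ if for every cocharacter $\lambda$ of $M$ with $H \subseteq P_\lambda$ there is a cocharacter $\mu$ of $M$ with $P_\lambda = P_\mu$ and $H \subseteq L_\mu$. *)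

theory Defs
  imports "HOL-Analysis.Analysis" "HOL-Computational_Algebra.Polynomial"
begin

definition alg_closed_field :: "'k::field itself \<Rightarrow> bool" where
  "alg_closed_field _ \<longleftrightarrow> (\<forall>p::'k poly. degree p > 0 \<longrightarrow> (\<exists>x. poly p x = 0))"

definition GL :: "('k::field^'n^'n) set" where
  "GL = {A. invertible A}"

definition is_subgroup :: "('k::field^'n^'n) set \<Rightarrow> bool" where
  "is_subgroup S \<longleftrightarrow> S \<subseteq> GL \<and> mat 1 \<in> S \<and>
     (\<forall>A\<in>S. \<forall>B\<in>S. A ** B \<in> S) \<and> (\<forall>A\<in>S. matrix_inv A \<in> S)"

inductive_set poly_fun :: "('k::field^'n^'n \<Rightarrow> 'k) set" where
  const: "(\<lambda>A. c) \<in> poly_fun"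
| coord: "(\<lambda>A. A $ i $ j) \<in> poly_fun"
| add: "f \<in> poly_fun \<Longrightarrow> g \<in> poly_fun \<Longrightarrow> (\<lambda>A. f A + g A) \<in> poly_fun"
| mult: "f \<in> poly_fun \<Longrightarrow> g \<in> poly_fun \<Longrightarrow> (\<lambda>A. f A * g A) \<in> poly_fun"

definition zariski_closed :: "('k::field^'n^'n) set \<Rightarrow> bool" where
  "zariski_closed C \<longleftrightarrow> (\<exists>F \<subseteq> poly_fun. C = {A. \<forall>f\<in>F. f A = 0})"

definition closed_in_GL :: "('k::field^'n^'n) set \<Rightarrow> bool" where
  "closed_in_GL S \<longleftrightarrow> S \<subseteq> GL \<and> (\<exists>C. zariski_closed C \<and> S = GL \<inter> C)"

definition zariski_connected :: "('k::field^'n^'n) set \<Rightarrow> bool" where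
  "zariski_connected S \<longleftrightarrow>
     \<not> (\<exists>C1 C2. zariski_closed C1 \<and> zariski_closed C2 \<and> S \<subseteq> C1 \<union> C2 \<and>
           S \<inter> C1 \<inter> C2 = {} \<and> S \<inter> C1 \<noteq> {} \<and> S \<inter> C2 \<noteq> {})"

fun matpow :: "'k::field^'n^'n \<Rightarrow> nat \<Rightarrow> 'k^'n^'n" where
  "matpow A 0 = mat 1"
| "matpow A (Suc m) = A ** matpow A m"

definition unipotent :: "'k::field^'n^'n \<Rightarrow> bool" where
  "unipotent A \<longleftrightarrow> (\<exists>m. matpow (A - mat 1) m = 0)"

definition closed_subgroup :: "('k::field^'n^'n) set \<Rightarrow> bool" where
  "closed_subgroup S \<longleftrightarrow> is_subgroup S \<and> closed_in_GL S"

definition normal_in :: "('k::field^'n^'n) set \<Rightarrow> ('k^'n^'n) set \<Rightarrow> bool" where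
  "normal_in U S \<longleftrightarrow> U \<subseteq> S \<and> (\<forall>g\<in>S. \<forall>u\<in>U. g ** u ** matrix_inv g \<in> U)"

text \<open>Reductive (not necessarily connected) linear algebraic group: a closed subgroup
  whose unipotent radical (largest connected closed normal unipotent subgroup) is trivial.\<close>
definition reductive :: "('k::field^'n^'n) set \<Rightarrow> bool" where
  "reductive K \<longleftrightarrow> closed_subgroup K \<and>
     (\<forall>U. closed_subgroup U \<and> normal_in U K \<and> zariski_connected U \<and> (\<forall>u\<in>U. unipotent u)
          \<longrightarrow> U = {mat 1})"

text \<open>A cocharacter of M: a morphism of algebraic groups G_m \<rightarrow> G with image in M.
  Morphism: entries are Laurent polynomials in a (regular functions on G_m),
  multiplicative on k^*. Values at a = 0 are irrelevant.\<close>
definition cocharacter :: "('k::field^'n^'n) set \<Rightarrow> ('k \<Rightarrow> 'k^'n^'n) \<Rightarrow> bool" where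
  "cocharacter M lam \<longleftrightarrow>
     (\<exists>N::nat. \<exists>p::'n \<Rightarrow> 'n \<Rightarrow> 'k poly. \<forall>a. a \<noteq> 0 \<longrightarrow>
         (\<forall>i j. lam a $ i $ j = poly (p i j) a / a ^ N)) \<and>
     (\<forall>a. a \<noteq> 0 \<longrightarrow> lam a \<in> M) \<and>
     (\<forall>a b. a \<noteq> 0 \<longrightarrow> b \<noteq> 0 \<longrightarrow> lam (a * b) = lam a ** lam b)"

text \<open>lim_{a\<rightarrow>0} lam(a) g lam(a)^{-1} exists: the map a \<mapsto> lam(a) g lam(a)^{-1}
  on G_m extends to a morphism on the affine line (polynomial entries);
  the limit is the value of the extension at 0.\<close>
definition has_limit :: "('k::field \<Rightarrow> 'k^'n^'n) \<Rightarrow> 'k^'n^'n \<Rightarrow> 'k^'n^'n \<Rightarrow> bool" where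
  "has_limit lam g l \<longleftrightarrow>
     (\<exists>p::'n \<Rightarrow> 'n \<Rightarrow> 'k poly.
        (\<forall>a. a \<noteq> 0 \<longrightarrow> (\<forall>i j. (lam a ** g ** matrix_inv (lam a)) $ i $ j = poly (p i j) a)) \<and>
        (\<forall>i j. l $ i $ j = poly (p i j) 0))"

definition P_of :: "('k::field \<Rightarrow> 'k^'n^'n) \<Rightarrow> ('k^'n^'n) set" where
  "P_of lam = {g \<in> GL. \<exists>l. has_limit lam g l}"

definition L_of :: "('k::field \<Rightarrow> 'k^'n^'n) \<Rightarrow> ('k^'n^'n) set" where
  "L_of lam = {g \<in> GL. has_limit lam g g}"

definition rel_Gcr :: "('k::field^'n^'n) set \<Rightarrow> ('k^'n^'n) set \<Rightarrow> bool" where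
  "rel_Gcr H M \<longleftrightarrow>
     (\<forall>lam. cocharacter M lam \<and> H \<subseteq> P_of lam \<longrightarrow>
        (\<exists>mu. cocharacter M mu \<and> P_of lam = P_of mu \<and> H \<subseteq> L_of mu))"

definition is_subspace :: "('k::field^'n) set \<Rightarrow> bool" where
  "is_subspace W \<longleftrightarrow> 0 \<in> W \<and> (\<forall>v\<in>W. \<forall>w\<in>W. v + w \<in> W) \<and> (\<forall>c. \<forall>v\<in>W. c *s v \<in> W)"

definition direct_sum_decomp :: "nat \<Rightarrow> (nat \<Rightarrow> ('k::field^'n) set) \<Rightarrow> bool" where
  "direct_sum_decomp n W \<longleftrightarrow> (\<forall>i<n. is_subspace (W i)) \<and>
     (\<forall>v. \<exists>vs. (\<forall>i<n. vs i \<in> W i) \<and> v = (\<Sum>i<n. vs i)) \<and>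
     (\<forall>vs. (\<forall>i<n. vs i \<in> W i) \<and> (\<Sum>i<n. vs i) = 0 \<longrightarrow> (\<forall>i<n. vs i = 0))"

definition preserves :: "nat \<Rightarrow> (nat \<Rightarrow> ('k::field^'n) set) \<Rightarrow> 'k^'n^'n \<Rightarrow> bool" where
  "preserves n W g \<longleftrightarrow> (\<forall>i<n. \<forall>v\<in>W i. g *v v \<in> W i)"

text \<open>Image of GL(V_i) in G: preserves the decomposition and acts trivially on V_j, j \<noteq> i.\<close>
definition acts_only_on :: "nat \<Rightarrow> (nat \<Rightarrow> ('k::field^'n) set) \<Rightarrow> nat \<Rightarrow> 'k^'n^'n \<Rightarrow> bool" where
  "acts_only_on n W i g \<longleftrightarrow> preserves n W g \<and> (\<forall>j<n. j \<noteq> i \<longrightarrow> (\<forall>v\<in>W j. g *v v = v))"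

definition prod_mats :: "nat \<Rightarrow> (nat \<Rightarrow> 'k::field^'n^'n) \<Rightarrow> 'k^'n^'n" where
  "prod_mats n ks = foldl (\<lambda>A i. A ** ks i) (mat 1) [0..<n]"

end

theory Submission
  imports Defs
begin

(*
  Over an infinite field a cocharacter is the same thing as a weight decomposition: orthogonal
  idempotents C k summing to 1, with lambda a acting by a^(k - N) on the image of C k. The limit
  of lambda a g (lambda a)^-1 as a -> 0 exists iff C k g C l = 0 for all k < l, and it is then the
  block-diagonal part of g. So P_lambda is the stabiliser of the flag formed by the images of the
  sums of the C k with k >= w, and L_lambda is the centraliser of the C k.

  The key step averages lambda over a second cocharacter mu with P_lambda = P_mu. Every weight
  space of mu is either contained in or killed by each projection of the flag of lambda, so
  nu a = lim (b -> 0) mu b (lambda a) (mu b)^-1 is a cocharacter with the flag of lambda that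
  commutes with everything commuting with mu. As a limit of conjugates, nu stays in every closed
  subgroup containing lambda and mu, and it acts only on V_i whenever lambda does.

  For "=>", average a cocharacter of K_i over the cocharacter of K that the hypothesis provides.
  For "<=", restrict a cocharacter of K to each V_i (acting trivially elsewhere), average these
  cocharacters of the K_i over the cocharacters provided by the hypothesis, and glue the results
  block-diagonally into a cocharacter of K with the flag of the original one.
*)

section \<open>Polynomials over an infinite field\<close>

lemma alg_closed_field_infinite:
  assumes "alg_closed_field TYPE('k::field)"
  shows "infinite (UNIV :: 'k set)"
proof
  assume fin: "finite (UNIV :: 'k set)"
  define q :: "'k poly" where "q = (\<Prod>x\<in>UNIV. [:-x, 1:])"
  have "degree q = card (UNIV :: 'k set)"
    unfolding q_def by (subst degree_prod_eq_sum_degree) auto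
  with fin have "degree q > 0" by (simp add: card_gt_0_iff)
  then have "degree (q + 1) > 0" by (simp add: degree_add_eq_left)
  then obtain x where "poly (q + 1) x = 0"
    using assms unfolding alg_closed_field_def by blast
  moreover have "poly q x = 0"
    unfolding q_def poly_prod using fin by (intro prod_zero) auto
  ultimately show False by simp
qed

lemma poly_eq_0_if_zero_on_nonzero:
  assumes "infinite (UNIV :: 'k::field set)" and "\<forall>a::'k. a \<noteq> 0 \<longrightarrow> poly p a = 0"
  shows "p = 0"
proof (rule ccontr)
  assume "p \<noteq> 0"
  then have "finite (insert 0 {x. poly p x = 0})" by (simp add: poly_roots_finite)
  moreover have "insert 0 {x. poly p x = 0} = UNIV" using assms(2) by auto
  ultimately show False using assms(1) by simp
qed

lemma power_sum_coeff_eq_0: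
  assumes "infinite (UNIV :: 'k::field set)"
    and "\<forall>a::'k. a \<noteq> 0 \<longrightarrow> (\<Sum>k\<le>D. c k * a ^ k) = 0" and "k \<le> D"
  shows "c k = 0"
proof -
  define p where "p = (\<Sum>k\<le>D. monom (c k) k)"
  have "p = 0"
    using assms(1,2) unfolding p_def by (intro poly_eq_0_if_zero_on_nonzero) (simp_all add: poly_sum poly_monom)
  moreover have "coeff p k = c k" unfolding p_def coeff_sum using assms(3) by (simp add: sum.delta)
  ultimately show ?thesis by simp
qed

lemma power_sum2_coeff_eq_0:
  assumes inf: "infinite (UNIV :: 'k::field set)"
    and h: "\<forall>a b::'k. a \<noteq> 0 \<longrightarrow> b \<noteq> 0 \<longrightarrow> (\<Sum>k\<le>D. \<Sum>l\<le>D. e k l * a ^ k * b ^ l) = 0"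
    and "k \<le> D" and "l \<le> D"
  shows "e k l = 0"
proof -
  have "(\<Sum>l\<le>D. e k l * b ^ l) = 0" if "b \<noteq> 0" for b :: 'k
  proof (rule power_sum_coeff_eq_0[OF inf _ \<open>k \<le> D\<close>], intro allI impI)
    fix a :: 'k assume "a \<noteq> 0"
    then show "(\<Sum>k\<le>D. (\<Sum>l\<le>D. e k l * b ^ l) * a ^ k) = 0"
      using h that by (simp add: sum_distrib_left sum_distrib_right mult_ac)
  qed
  then show ?thesis using power_sum_coeff_eq_0[OF inf _ \<open>l \<le> D\<close>] by blast
qed

lemma poly_eq_monom_over_power:
  assumes "infinite (UNIV :: 'k::field set)"
    and "\<forall>a::'k. a \<noteq> 0 \<longrightarrow> poly q a * a ^ l = a ^ k * c"
  shows "k < l \<Longrightarrow> c = 0" and "poly q 0 = (if k = l then c else 0)"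
proof -
  have eq: "monom 1 l * q = monom c k"
    using assms by (intro poly_eq_0_if_zero_on_nonzero[of "monom 1 l * q - monom c k", simplified])
      (auto simp: poly_monom mult_ac)
  show "c = 0" if "k < l"
    using arg_cong[OF eq, of "\<lambda>p. coeff p k"] that by (simp add: coeff_monom_mult)
  have "coeff q 0 = coeff (monom c k) l"
    using arg_cong[OF eq, of "\<lambda>p. coeff p (0 + l)"] by (simp only: coeff_monom_mult) simp
  then show "poly q 0 = (if k = l then c else 0)" by (simp add: poly_0_coeff_0)
qed

lemma poly_eq_sum_coeff_upto:
  assumes "degree p \<le> D"
  shows "poly p (x::'k::field) = (\<Sum>k\<le>D. coeff p k * x ^ k)"
proof -
  have "poly p x = (\<Sum>k\<le>degree p. coeff p k * x ^ k)" by (rule poly_altdef)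
  also have "\<dots> = (\<Sum>k\<le>D. coeff p k * x ^ k)"
    using assms by (intro sum.mono_neutral_left) (auto simp: coeff_eq_0)
  finally show ?thesis .
qed

section \<open>Matrices\<close>

definition scale_mat :: "'k::field \<Rightarrow> 'k^'n^'n \<Rightarrow> 'k^'n^'n" where
  "scale_mat c A = (\<chi> i j. c * A $ i $ j)"

lemma scale_mat_nth [simp]: "scale_mat c A $ i $ j = c * A $ i $ j"
  by (simp add: scale_mat_def)

lemma matrix_mult_nth: "((A::'k::field^'n^'n) ** B) $ i $ j = (\<Sum>k\<in>UNIV. A $ i $ k * B $ k $ j)"
  unfolding matrix_matrix_mult_def by simp

lemma scale_mat_mult_left [simp]: "scale_mat c A ** (B::'k::field^'n^'n) = scale_mat c (A ** B)"
  by (simp add: vec_eq_iff matrix_mult_nth sum_distrib_left mult_ac)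

lemma scale_mat_mult_right [simp]: "(A::'k::field^'n^'n) ** scale_mat c B = scale_mat c (A ** B)"
  by (simp add: vec_eq_iff matrix_mult_nth sum_distrib_left mult_ac)

lemma scale_mat_scale_mat [simp]: "scale_mat c (scale_mat d A) = scale_mat (c * d) (A::'k::field^'n^'n)"
  by (simp add: vec_eq_iff mult_ac)

lemma scale_mat_one [simp]: "scale_mat 1 A = (A::'k::field^'n^'n)"
  by (simp add: vec_eq_iff)

lemma scale_mat_zero [simp]: "scale_mat 0 A = (0::'k::field^'n^'n)" "scale_mat c 0 = (0::'k^'n^'n)"
  by (simp_all add: vec_eq_iff)

lemma scale_mat_add: "scale_mat c (A + B) = scale_mat c A + scale_mat c (B::'k::field^'n^'n)"
  by (simp add: vec_eq_iff distrib_left)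

lemma scale_mat_diff: "scale_mat c (A - B) = scale_mat c A - scale_mat c (B::'k::field^'n^'n)"
  by (simp add: vec_eq_iff right_diff_distrib)

lemma scale_mat_sum: "scale_mat c (\<Sum>k\<in>S. f k) = (\<Sum>k\<in>S. scale_mat c (f k :: 'k::field^'n^'n))"
  by (induct S rule: infinite_finite_induct) (auto simp: scale_mat_add)

lemma matrix_add_rdistrib: "((A::'k::field^'n^'n) + B) ** C = A ** C + B ** C"
  by (simp add: vec_eq_iff matrix_mult_nth distrib_right sum.distrib)

lemma matrix_diff_rdistrib: "((A::'k::field^'n^'n) - B) ** C = A ** C - B ** C"
  by (simp add: vec_eq_iff matrix_mult_nth left_diff_distrib sum_subtractf)

lemma matrix_diff_ldistrib: "(C::'k::field^'n^'n) ** (A - B) = C ** A - C ** B"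
  by (simp add: vec_eq_iff matrix_mult_nth right_diff_distrib sum_subtractf)

lemma sum_matrix_mult: "(\<Sum>k\<in>S. f k) ** B = (\<Sum>k\<in>S. (f k :: 'k::field^'n^'n) ** B)"
  by (induct S rule: infinite_finite_induct) (auto simp: matrix_add_rdistrib)

lemma matrix_mult_sum: "(B::'k::field^'n^'n) ** (\<Sum>k\<in>S. f k) = (\<Sum>k\<in>S. B ** (f k::'k^'n^'n))"
  by (induct S rule: infinite_finite_induct) (auto simp: matrix_add_ldistrib)

lemma sum_mat_nth: "(\<Sum>k\<in>S. f k) $ i $ j = (\<Sum>k\<in>S. (f k :: 'k::field^'n^'n) $ i $ j)"
  by (induct S rule: infinite_finite_induct) auto

lemma commute_sum:
  "(\<And>x. x \<in> S \<Longrightarrow> f x ** Z = Z ** f x) \<Longrightarrow> (\<Sum>x\<in>S. f x) ** Z = Z ** (\<Sum>x\<in>S. f x :: 'k::field^'n^'n)"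
  unfolding sum_matrix_mult matrix_mult_sum by (rule sum.cong) auto

lemma matrix_inv_mult:
  fixes A :: "'k::field^'n^'n"
  assumes "invertible A"
  shows "A ** matrix_inv A = mat 1" and "matrix_inv A ** A = mat 1"
proof -
  have "A ** matrix_inv A = mat 1 \<and> matrix_inv A ** A = mat 1"
    using assms unfolding matrix_inv_def invertible_def by (rule someI_ex)
  then show "A ** matrix_inv A = mat 1" "matrix_inv A ** A = mat 1" by auto
qed

lemma matrix_inv_unique:
  fixes A B :: "'k::field^'n^'n"
  assumes "A ** B = mat 1"
  shows "matrix_inv A = B"
proof -
  have inv: "invertible A" using assms invertible_right_inverse by blast
  have "matrix_inv A = matrix_inv A ** (A ** B)" using assms by simp
  also have "\<dots> = B" using matrix_inv_mult(2)[OF inv] by (simp add: matrix_mul_assoc)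
  finally show ?thesis .
qed

lemma idempotent_invertible_eq_1:
  fixes A :: "'k::field^'n^'n"
  assumes "invertible A" and "A ** A = A"
  shows "A = mat 1"
proof -
  have "mat 1 = matrix_inv A ** (A ** A)" using assms by (simp add: matrix_inv_mult)
  also have "\<dots> = A" using assms(1) by (simp add: matrix_mul_assoc matrix_inv_mult)
  finally show ?thesis by simp
qed

lemma sandwiches_eq_0_imp:
  fixes A B :: "'k::field^'n^'n"
  assumes "\<forall>X. A ** X ** B = 0"
  shows "A = 0 \<or> B = 0"
proof (rule ccontr)
  assume "\<not> (A = 0 \<or> B = 0)"
  then obtain i j s t where a: "A $ i $ j \<noteq> 0" and b: "B $ s $ t \<noteq> 0"
    by (auto simp: vec_eq_iff)
  define X :: "'k^'n^'n" where "X = (\<chi> r c. if r = j \<and> c = s then 1 else 0)"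
  have "(A ** X ** B) $ i $ t = (\<Sum>k\<in>UNIV. (\<Sum>m\<in>UNIV. A $ i $ m * X $ m $ k) * B $ k $ t)"
    unfolding matrix_mult_nth ..
  also have "\<dots> = (\<Sum>k\<in>UNIV. (if k = s then A $ i $ j else 0) * B $ k $ t)"
    by (rule sum.cong) (auto simp: X_def if_distrib if_distribR sum.delta cong: if_cong)
  also have "\<dots> = A $ i $ j * B $ s $ t"
    by (simp add: if_distrib if_distribR sum.delta cong: if_cong)
  finally show False using a b assms by simp
qed

definition poly_mat :: "('n \<Rightarrow> 'n \<Rightarrow> 'k::field poly) \<Rightarrow> 'k \<Rightarrow> 'k^'n^'n" where
  "poly_mat P a = (\<chi> i j. poly (P i j) a)"

lemma poly_mat_nth [simp]: "poly_mat P a $ i $ j = poly (P i j) a"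
  by (simp add: poly_mat_def)

lemma sandwich_poly_mat:
  fixes A B :: "'k::field^'n^'n"
  shows "A ** poly_mat P a ** B =
    poly_mat (\<lambda>i j. \<Sum>s\<in>UNIV. \<Sum>t\<in>UNIV. smult (A $ i $ s * B $ t $ j) (P s t)) a"
proof -
  have "(A ** poly_mat P a ** B) $ i $ j = (\<Sum>s\<in>UNIV. \<Sum>t\<in>UNIV. A $ i $ s * B $ t $ j * poly (P s t) a)"
    for i j
  proof -
    have "(A ** poly_mat P a ** B) $ i $ j = (\<Sum>t\<in>UNIV. \<Sum>s\<in>UNIV. A $ i $ s * poly (P s t) a * B $ t $ j)"
      by (simp add: matrix_mult_nth sum_distrib_right)
    also have "\<dots> = (\<Sum>s\<in>UNIV. \<Sum>t\<in>UNIV. A $ i $ s * poly (P s t) a * B $ t $ j)"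
      by (rule sum.swap)
    finally show ?thesis by (simp add: mult_ac)
  qed
  then show ?thesis by (simp add: vec_eq_iff poly_sum)
qed

lemma det_poly_mat: "\<exists>q. \<forall>a. det (poly_mat (P::'n::finite \<Rightarrow> 'n \<Rightarrow> 'k::field poly) a) = poly q a"
  by (rule exI[of _ "\<Sum>p | p permutes (UNIV::'n set). smult (of_int (sign p)) (\<Prod>i\<in>UNIV. P i (p i))"])
    (simp add: det_def poly_sum poly_prod)

lemma invertible_one_plus_scale:
  fixes Y :: "'k::field^'n^'n"
  assumes "infinite (UNIV :: 'k set)"
  obtains c where "c \<noteq> 0" and "invertible (mat 1 + scale_mat c Y)"
proof -
  define P where "P = (\<lambda>i j. [: (mat 1 :: 'k^'n^'n) $ i $ j, Y $ i $ j :])"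
  have P: "poly_mat P c = mat 1 + scale_mat c Y" for c
    unfolding P_def by (simp add: vec_eq_iff mult_ac)
  obtain q where q: "\<forall>c. det (poly_mat P c) = poly q c" using det_poly_mat by blast
  have "poly q 0 = 1" using q P[of 0] by (metis add.right_neutral det_I scale_mat_zero(1))
  then have "finite (insert 0 {x. poly q x = 0})" by (auto intro: poly_roots_finite)
  then obtain c where "c \<notin> insert 0 {x. poly q x = 0}"
    using assms by (metis ex_new_if_finite)
  then have "c \<noteq> 0" and "det (mat 1 + scale_mat c Y) \<noteq> 0" using q P by auto
  then show thesis using that invertible_det_nz by blast
qed

section \<open>Cocharacters as weight decompositions\<close>

definition weight_decomp :: "nat \<Rightarrow> (nat \<Rightarrow> 'k::field^'n^'n) \<Rightarrow> bool" where
  "weight_decomp D C \<longleftrightarrow> (\<forall>k>D. C k = 0) \<and> (\<forall>k l. C k ** C l = (if k = l then C k else 0))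
     \<and> (\<Sum>k\<le>D. C k) = mat 1"

text \<open>Acts by \<open>a ^ (k - N)\<close> on the image of \<open>C k\<close>; the shift \<open>N\<close> keeps the exponents natural.\<close>
definition weight_curve :: "nat \<Rightarrow> nat \<Rightarrow> (nat \<Rightarrow> 'k::field^'n^'n) \<Rightarrow> 'k \<Rightarrow> 'k^'n^'n" where
  "weight_curve N D C a = (\<Sum>k\<le>D. scale_mat (a ^ k / a ^ N) (C k))"

definition nonneg_weights :: "(nat \<Rightarrow> 'k::field^'n^'n) \<Rightarrow> 'k^'n^'n \<Rightarrow> bool" where
  "nonneg_weights C g \<longleftrightarrow> (\<forall>k l. k < l \<longrightarrow> C k ** g ** C l = 0)"

definition weight_part :: "nat \<Rightarrow> (nat \<Rightarrow> 'k::field^'n^'n) \<Rightarrow> 'k^'n^'n \<Rightarrow> 'k^'n^'n" where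
  "weight_part D C X = (\<Sum>k\<le>D. C k ** X ** C k)"

lemma weight_decompD:
  assumes "weight_decomp D C"
  shows "D < k \<Longrightarrow> C k = 0" and "C k ** C l = (if k = l then C k else 0)"
    and "(\<Sum>k\<le>D. C k) = mat 1"
  using assms unfolding weight_decomp_def by auto

lemma weight_decomp_mono:
  assumes dc: "weight_decomp D C" and "D \<le> D'"
  shows "weight_decomp D' C" and "weight_curve N D' C = weight_curve N D C"
proof -
  have "(\<Sum>k\<le>D'. C k) = (\<Sum>k\<le>D. C k)"
    using assms weight_decompD(1)[OF dc] by (intro sum.mono_neutral_right) auto
  then show "weight_decomp D' C" using assms unfolding weight_decomp_def by auto
  show "weight_curve N D' C = weight_curve N D C"
    using assms weight_decompD(1)[OF dc] unfolding weight_curve_def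
    by (intro ext sum.mono_neutral_right) auto
qed

lemma weight_curve_mult_expand:
  "weight_curve N D C a ** weight_curve N D C b =
     (\<Sum>k\<le>D. \<Sum>l\<le>D. scale_mat (a ^ k / a ^ N * (b ^ l / b ^ N)) (C k ** C l))"
  unfolding weight_curve_def by (simp only: sum_matrix_mult, simp only: matrix_mult_sum, simp add: mult_ac)

lemma weight_curve_mult:
  assumes "weight_decomp D C"
  shows "weight_curve N D C (a * b) = weight_curve N D C a ** weight_curve N D C b"
proof -
  have "weight_curve N D C a ** weight_curve N D C b =
      (\<Sum>k\<le>D. \<Sum>l\<le>D. if k = l then scale_mat (a ^ k / a ^ N * (b ^ k / b ^ N)) (C k) else 0)"
    unfolding weight_curve_mult_expand using weight_decompD(2)[OF assms]
    by (intro sum.cong refl) auto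
  also have "\<dots> = weight_curve N D C (a * b)"
    unfolding weight_curve_def by (intro sum.cong refl) (simp add: sum.delta power_mult_distrib)
  finally show ?thesis by simp
qed

lemma weight_curve_one: "weight_decomp D C \<Longrightarrow> weight_curve N D C 1 = mat 1"
  using weight_decompD(3) unfolding weight_curve_def by simp

lemma weight_curve_inverse:
  assumes "weight_decomp D C" and "a \<noteq> 0"
  shows "weight_curve N D C a ** weight_curve N D C (inverse a) = mat 1"
    and "invertible (weight_curve N D C a)"
    and "matrix_inv (weight_curve N D C a) = weight_curve N D C (inverse a)"
proof -
  show *: "weight_curve N D C a ** weight_curve N D C (inverse a) = mat 1"
    using assms weight_curve_mult[OF assms(1), of N a "inverse a"] weight_curve_one[OF assms(1)] by simp
  then show "invertible (weight_curve N D C a)" using invertible_right_inverse by blast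
  from * show "matrix_inv (weight_curve N D C a) = weight_curve N D C (inverse a)"
    by (rule matrix_inv_unique)
qed

lemma weight_curve_in_GL: "weight_decomp D C \<Longrightarrow> a \<noteq> 0 \<Longrightarrow> weight_curve N D C a \<in> GL"
  using weight_curve_inverse(2) unfolding GL_def by blast

lemma weight_curve_nth:
  "weight_curve N D C a $ i $ j = poly (\<Sum>k\<le>D. monom (C k $ i $ j) k) a / a ^ N"
  unfolding weight_curve_def sum_mat_nth by (simp add: poly_sum poly_monom sum_divide_distrib mult_ac)

lemma cocharacter_weight_curve_iff:
  assumes "weight_decomp D C"
  shows "cocharacter M (weight_curve N D C) \<longleftrightarrow> (\<forall>a. a \<noteq> 0 \<longrightarrow> weight_curve N D C a \<in> M)"
proof -
  have "\<exists>N' p. \<forall>a. a \<noteq> 0 \<longrightarrow> (\<forall>i j. weight_curve N D C a $ i $ j = poly (p i j) a / a ^ N')"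
    by (intro exI[of _ N] exI[of _ "\<lambda>i j. \<Sum>k\<le>D. monom (C k $ i $ j) k"])
      (simp add: weight_curve_nth)
  then show ?thesis unfolding cocharacter_def using weight_curve_mult[OF assms] by blast
qed

lemma cocharacter_mono: "cocharacter M lam \<Longrightarrow> M \<subseteq> M' \<Longrightarrow> cocharacter M' lam"
  unfolding cocharacter_def by blast

lemma weight_decomp_commute:
  assumes inf: "infinite (UNIV :: 'k::field set)" and dc: "weight_decomp D (C :: nat \<Rightarrow> 'k^'n^'n)"
    and comm: "\<And>a. a \<noteq> 0 \<Longrightarrow> weight_curve N D C a ** Z = Z ** weight_curve N D C a"
  shows "C k ** Z = Z ** C k"
proof (cases "k \<le> D")
  case False
  then show ?thesis using weight_decompD(1)[OF dc, of k] by simp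
next
  case True
  define M where "M k = C k ** Z - Z ** C k" for k
  have "M k $ i $ j = 0" for i j
  proof (rule power_sum_coeff_eq_0[OF inf _ True], intro allI impI)
    fix a :: 'k assume a: "a \<noteq> 0"
    have "(\<Sum>k\<le>D. scale_mat (a ^ k / a ^ N) (M k)) = 0"
      using comm[OF a] unfolding weight_curve_def M_def sum_matrix_mult matrix_mult_sum
      by (simp add: scale_mat_diff sum_subtractf)
    then have "scale_mat (a ^ N) (\<Sum>k\<le>D. scale_mat (a ^ k / a ^ N) (M k)) $ i $ j = 0" by simp
    then show "(\<Sum>k\<le>D. M k $ i $ j * a ^ k) = 0"
      using a unfolding scale_mat_sum sum_mat_nth by (simp add: mult.commute)
  qed
  then show ?thesis unfolding M_def by (simp add: vec_eq_iff)
qed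

lemma cocharacter_laurent_expansion:
  assumes "cocharacter M lam"
  shows "\<exists>N D C. (\<forall>k>D. C k = 0) \<and> (\<forall>a. a \<noteq> 0 \<longrightarrow> lam a = weight_curve N D C a)"
proof -
  obtain N p where p: "\<forall>a. a \<noteq> 0 \<longrightarrow> (\<forall>i j. lam a $ i $ j = poly (p i j) a / a ^ N)"
    using assms unfolding cocharacter_def by (elim conjE exE) blast
  define D where "D = Max (range (\<lambda>(i, j). degree (p i j)))"
  have deg: "degree (p i j) \<le> D" for i j
    unfolding D_def by (rule Max_ge) auto
  define C :: "nat \<Rightarrow> 'a^'b^'b" where "C k = (\<chi> i j. coeff (p i j) k)" for k
  have "C k = 0" if "D < k" for k
    using that unfolding C_def by (auto simp: vec_eq_iff intro!: coeff_eq_0 order.strict_trans1[OF deg])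
  moreover have "lam a = weight_curve N D C a" if "a \<noteq> 0" for a
  proof -
    have "lam a $ i $ j = weight_curve N D C a $ i $ j" for i j
      using p that unfolding weight_curve_def sum_mat_nth
      by (simp add: poly_eq_sum_coeff_upto[OF deg] C_def sum_divide_distrib mult_ac)
    then show ?thesis by (simp add: vec_eq_iff)
  qed
  ultimately show ?thesis by blast
qed

lemma weight_decompI_multiplicative:
  assumes inf: "infinite (UNIV :: 'k::field set)"
    and vanish: "\<And>k. D < k \<Longrightarrow> C k = 0" and one: "weight_curve N D C 1 = (mat 1 :: 'k^'n^'n)"
    and mult: "\<And>a b. a \<noteq> 0 \<Longrightarrow> b \<noteq> 0 \<Longrightarrow>
      weight_curve N D C (a * b) = weight_curve N D C a ** weight_curve N D C b"
  shows "weight_decomp D C"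
proof -
  define E where "E k l = (if k = l then C k else 0) - C k ** C l" for k l
  have E_sum: "(\<Sum>k\<le>D. \<Sum>l\<le>D. scale_mat (a ^ k * b ^ l) (E k l)) = 0"
    if a: "a \<noteq> 0" and b: "b \<noteq> 0" for a b
  proof -
    have "weight_curve N D C (a * b) =
      (\<Sum>k\<le>D. \<Sum>l\<le>D. scale_mat (a ^ k / a ^ N * (b ^ l / b ^ N)) (if k = l then C k else 0))"
      unfolding weight_curve_def
      by (intro sum.cong refl) (simp add: power_mult_distrib if_distrib sum.delta cong: if_cong)
    then have "(\<Sum>k\<le>D. \<Sum>l\<le>D. scale_mat (a ^ k / a ^ N * (b ^ l / b ^ N)) (E k l)) = 0"
      using mult[OF a b] unfolding E_def weight_curve_mult_expand
      by (simp add: scale_mat_diff sum_subtractf)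
    then have "scale_mat (a ^ N * b ^ N)
        (\<Sum>k\<le>D. \<Sum>l\<le>D. scale_mat (a ^ k / a ^ N * (b ^ l / b ^ N)) (E k l)) = 0"
      by simp
    then show ?thesis using a b by (simp add: scale_mat_sum field_simps)
  qed
  have "E k l = 0" if "k \<le> D" "l \<le> D" for k l
  proof -
    have "E k l $ i $ j = 0" for i j
    proof (rule power_sum2_coeff_eq_0[OF inf _ that], intro allI impI)
      fix a b :: 'k assume "a \<noteq> 0" "b \<noteq> 0"
      then have "(\<Sum>k\<le>D. \<Sum>l\<le>D. scale_mat (a ^ k * b ^ l) (E k l)) $ i $ j = 0"
        using E_sum by simp
      then show "(\<Sum>k\<le>D. \<Sum>l\<le>D. E k l $ i $ j * a ^ k * b ^ l) = 0"
        unfolding sum_mat_nth by (simp add: mult_ac)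
    qed
    then show ?thesis by (simp add: vec_eq_iff)
  qed
  then have "C k ** C l = (if k = l then C k else 0)" for k l
    using vanish unfolding E_def by (cases "k \<le> D \<and> l \<le> D") auto
  moreover have "(\<Sum>k\<le>D. C k) = mat 1" using one unfolding weight_curve_def by simp
  ultimately show ?thesis unfolding weight_decomp_def using vanish by blast
qed

lemma cocharacter_weight_decomp:
  assumes inf: "infinite (UNIV :: 'k::field set)"
    and co: "cocharacter M (lam :: 'k \<Rightarrow> 'k^'n^'n)" and "M \<subseteq> GL"
  shows "\<exists>N D C. weight_decomp D C \<and> N \<le> D \<and> (\<forall>a. a \<noteq> 0 \<longrightarrow> lam a = weight_curve N D C a)"
proof -
  from cocharacter_laurent_expansion[OF co] obtain N D0 C
    where vanish: "\<forall>k>D0. C k = 0" and lam: "\<forall>a. a \<noteq> 0 \<longrightarrow> lam a = weight_curve N D0 C a"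
    by blast
  have inM: "\<forall>a. a \<noteq> 0 \<longrightarrow> lam a \<in> M"
    and mult: "\<forall>a b. a \<noteq> 0 \<longrightarrow> b \<noteq> 0 \<longrightarrow> lam (a * b) = lam a ** lam b"
    using co unfolding cocharacter_def by simp_all
  have "lam 1 \<in> GL" using inM \<open>M \<subseteq> GL\<close> by auto
  then have "lam 1 = mat 1"
    using mult[rule_format, of 1 1] unfolding GL_def by (intro idempotent_invertible_eq_1) simp_all
  moreover have "weight_curve N D0 C (a * b) = weight_curve N D0 C a ** weight_curve N D0 C b"
    if "a \<noteq> 0" "b \<noteq> 0" for a b
    using that mult lam[rule_format, of a] lam[rule_format, of b] lam[rule_format, of "a * b"] by simp
  ultimately have dc: "weight_decomp D0 C"
    using vanish lam[rule_format, of 1] by (intro weight_decompI_multiplicative[OF inf]) simp_all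
  have "max D0 N \<ge> D0" by simp
  note mono = weight_decomp_mono[OF dc this]
  have "\<forall>a. a \<noteq> 0 \<longrightarrow> lam a = weight_curve N (max D0 N) C a" using lam by (simp add: mono(2))
  then show ?thesis using mono(1) by (intro exI[of _ N] exI[of _ "max D0 N"] exI[of _ C]) simp
qed

section \<open>Limits, parabolic subgroups and flags\<close>

lemma has_limit_cong:
  assumes "\<And>a. a \<noteq> 0 \<Longrightarrow> lam a = lam' a"
  shows "has_limit lam = has_limit lam'"
proof (intro ext)
  fix X L
  show "has_limit lam X L = has_limit lam' X L" unfolding has_limit_def using assms by simp
qed

lemma P_of_cong:
  assumes "\<And>a. a \<noteq> 0 \<Longrightarrow> lam a = lam' a"
  shows "P_of lam = P_of lam'"
  unfolding P_of_def using has_limit_cong[OF assms] by simp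

lemma L_of_cong:
  assumes "\<And>a. a \<noteq> 0 \<Longrightarrow> lam a = lam' a"
  shows "L_of lam = L_of lam'"
  unfolding L_of_def using has_limit_cong[OF assms] by simp

lemma weight_curve_conj:
  assumes "weight_decomp D C" and "a \<noteq> 0"
  shows "weight_curve N D C a ** X ** matrix_inv (weight_curve N D C a) =
    (\<Sum>k\<le>D. \<Sum>l\<le>D. scale_mat (a ^ k / a ^ l) (C k ** X ** C l))"
proof -
  have "weight_curve N D C a ** X ** matrix_inv (weight_curve N D C a) =
      (\<Sum>k\<le>D. \<Sum>l\<le>D. scale_mat (a ^ k / a ^ N * (inverse a ^ l / inverse a ^ N)) (C k ** X ** C l))"
    unfolding weight_curve_inverse(3)[OF assms] unfolding weight_curve_def
    by (simp only: sum_matrix_mult, simp only: matrix_mult_sum, simp add: ac_simps)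
  also have "\<dots> = (\<Sum>k\<le>D. \<Sum>l\<le>D. scale_mat (a ^ k / a ^ l) (C k ** X ** C l))"
    using assms(2) by (simp add: power_inverse field_simps)
  finally show ?thesis .
qed

lemma weight_component_conj:
  assumes dc: "weight_decomp D C" and "a \<noteq> 0"
  shows "C p ** (weight_curve N D C a ** X ** matrix_inv (weight_curve N D C a)) ** C q =
    scale_mat (a ^ p / a ^ q) (C p ** X ** C q)"
proof -
  have "C p ** (C k ** X ** C l) ** C q = (C p ** C k) ** X ** (C l ** C q)" for k l
    by (simp add: matrix_mul_assoc)
  then have "C p ** (C k ** X ** C l) ** C q = (if p = k \<and> l = q then C p ** X ** C q else 0)" for k l
    using weight_decompD(2)[OF dc] by auto
  then have "C p ** (weight_curve N D C a ** X ** matrix_inv (weight_curve N D C a)) ** C q =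
      (\<Sum>k\<le>D. \<Sum>l\<le>D. if p = k \<and> l = q then scale_mat (a ^ p / a ^ q) (C p ** X ** C q) else 0)"
    unfolding weight_curve_conj[OF assms] sum_matrix_mult matrix_mult_sum
    by (intro sum.cong refl) auto
  also have "\<dots> = (\<Sum>k\<le>D. if p = k then scale_mat (a ^ p / a ^ q) (C p ** X ** C q) else 0)"
    using weight_decompD(1)[OF dc, of q] by (intro sum.cong refl) (auto simp: sum.delta')
  also have "\<dots> = scale_mat (a ^ p / a ^ q) (C p ** X ** C q)"
    using weight_decompD(1)[OF dc, of p] by (auto simp: sum.delta)
  finally show ?thesis .
qed

lemma weight_decomp_sandwich:
  assumes "weight_decomp D C"
  shows "X = (\<Sum>k\<le>D. \<Sum>l\<le>D. C k ** X ** C l)"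
proof -
  have "X = (\<Sum>k\<le>D. C k) ** X ** (\<Sum>l\<le>D. C l)" using weight_decompD(3)[OF assms] by simp
  then show ?thesis by (simp only: sum_matrix_mult, simp only: matrix_mult_sum)
qed

lemma has_limit_weight_curveD:
  assumes inf: "infinite (UNIV :: 'k::field set)"
    and dc: "weight_decomp D (C :: nat \<Rightarrow> 'k^'n^'n)"
    and lim: "has_limit (weight_curve N D C) X L"
  shows "nonneg_weights C X" and "L = weight_part D C X"
proof -
  obtain P where P: "\<And>a. a \<noteq> 0 \<Longrightarrow>
      weight_curve N D C a ** X ** matrix_inv (weight_curve N D C a) = poly_mat P a"
    and L: "L = poly_mat P 0"
    using lim unfolding has_limit_def by (auto simp: vec_eq_iff)
  have component: "(p < q \<longrightarrow> C p ** X ** C q = 0) \<and>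
      C p ** L ** C q = (if p = q then C p ** X ** C q else 0)" for p q
  proof -
    define Q where "Q = (\<lambda>i j. \<Sum>s\<in>UNIV. \<Sum>t\<in>UNIV. smult (C p $ i $ s * C q $ t $ j) (P s t))"
    have Q: "poly_mat Q a = C p ** poly_mat P a ** C q" for a
      unfolding Q_def by (rule sandwich_poly_mat[symmetric])
    have "(p < q \<longrightarrow> (C p ** X ** C q) $ i $ j = 0) \<and>
        poly (Q i j) 0 = (if p = q then (C p ** X ** C q) $ i $ j else 0)" for i j
    proof -
      have "\<forall>a. a \<noteq> 0 \<longrightarrow> poly (Q i j) a * a ^ q = a ^ p * (C p ** X ** C q) $ i $ j"
      proof (intro allI impI)
        fix a :: 'k assume a: "a \<noteq> 0"
        have "poly (Q i j) a = a ^ p / a ^ q * (C p ** X ** C q) $ i $ j"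
          using Q[of a] P[OF a] weight_component_conj[OF dc a, where p = p and q = q and X = X and N = N]
          by (metis poly_mat_nth scale_mat_nth)
        then show "poly (Q i j) a * a ^ q = a ^ p * (C p ** X ** C q) $ i $ j"
          using a by (simp add: field_simps)
      qed
      from poly_eq_monom_over_power[OF inf this] show ?thesis by blast
    qed
    then show ?thesis unfolding L Q[symmetric] by (auto simp: vec_eq_iff)
  qed
  show "nonneg_weights C X" unfolding nonneg_weights_def using component by blast
  have "L = (\<Sum>k\<le>D. \<Sum>l\<le>D. C k ** L ** C l)" by (rule weight_decomp_sandwich[OF dc])
  also have "\<dots> = (\<Sum>k\<le>D. \<Sum>l\<le>D. if k = l then C k ** X ** C k else 0)"
    using component by (intro sum.cong refl) auto
  finally show "L = weight_part D C X" unfolding weight_part_def by (simp add: sum.delta)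
qed

lemma has_limit_weight_curveI:
  assumes dc: "weight_decomp D C" and nonneg: "nonneg_weights C X"
  shows "has_limit (weight_curve N D C) X (weight_part D C X)"
proof -
  define P where "P = (\<lambda>i j. \<Sum>k\<le>D. \<Sum>l\<le>D.
    if l \<le> k then monom ((C k ** X ** C l) $ i $ j) (k - l) else 0)"
  have "weight_curve N D C a ** X ** matrix_inv (weight_curve N D C a) = poly_mat P a"
    if a: "a \<noteq> 0" for a
  proof -
    have "weight_curve N D C a ** X ** matrix_inv (weight_curve N D C a) =
        (\<Sum>k\<le>D. \<Sum>l\<le>D. if l \<le> k then scale_mat (a ^ (k - l)) (C k ** X ** C l) else 0)"
      unfolding weight_curve_conj[OF dc a] using nonneg a
      by (intro sum.cong refl) (auto simp: nonneg_weights_def power_diff)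
    also have "\<dots> = poly_mat P a"
      unfolding P_def vec_eq_iff poly_mat_nth sum_mat_nth poly_sum
      by (auto intro!: sum.cong simp: poly_monom mult_ac)
    finally show ?thesis .
  qed
  moreover have "weight_part D C X = poly_mat P 0"
  proof -
    have "poly_mat P 0 = (\<Sum>k\<le>D. \<Sum>l\<le>D. if l = k then C k ** X ** C l else 0)"
      unfolding P_def vec_eq_iff poly_mat_nth sum_mat_nth poly_sum
      by (auto intro!: sum.cong simp: poly_monom power_0_left)
    then show ?thesis unfolding weight_part_def by (simp add: sum.delta')
  qed
  ultimately show ?thesis unfolding has_limit_def by (intro exI[of _ P]) (auto simp: vec_eq_iff)
qed

lemma has_limit_weight_curve_iff:
  assumes "infinite (UNIV :: 'k::field set)" and "weight_decomp D (C :: nat \<Rightarrow> 'k^'n^'n)"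
  shows "has_limit (weight_curve N D C) X L \<longleftrightarrow> nonneg_weights C X \<and> L = weight_part D C X"
  using has_limit_weight_curveD[OF assms] has_limit_weight_curveI[OF assms(2)] by blast

lemma weight_part_eq_self_iff:
  assumes dc: "weight_decomp D C"
  shows "weight_part D C g = g \<longleftrightarrow> (\<forall>k. C k ** g = g ** C k)"
proof
  have "C m ** (C k ** g ** C k) = (if k = m then C m ** g ** C m else 0)"
    and "(C k ** g ** C k) ** C m = (if k = m then C m ** g ** C m else 0)" for k m
    using weight_decompD(2)[OF dc]
    by (simp_all add: matrix_mul_assoc) (simp_all add: matrix_mul_assoc[symmetric])
  then have "C m ** weight_part D C g = C m ** g ** C m" and "weight_part D C g ** C m = C m ** g ** C m"
    for m
    unfolding weight_part_def matrix_mult_sum sum_matrix_mult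
    using weight_decompD(1)[OF dc, of m] by (auto simp: sum.delta')
  then show "\<forall>k. C k ** g = g ** C k" if "weight_part D C g = g" using that by metis
next
  assume comm: "\<forall>k. C k ** g = g ** C k"
  have "weight_part D C g = (\<Sum>k\<le>D. g ** (C k ** C k))"
    unfolding weight_part_def using comm by (simp add: matrix_mul_assoc)
  also have "\<dots> = g" using weight_decompD(2,3)[OF dc] by (simp add: matrix_mult_sum[symmetric])
  finally show "weight_part D C g = g" .
qed

lemma nonneg_weights_if_commute:
  assumes "weight_decomp D C" and "\<forall>k. C k ** g = g ** C k"
  shows "nonneg_weights C g"
  unfolding nonneg_weights_def
proof (intro allI impI)
  fix k l :: nat assume "k < l"
  have "C k ** g ** C l = g ** (C k ** C l)" using assms(2) by (simp add: matrix_mul_assoc)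
  then show "C k ** g ** C l = 0" using weight_decompD(2)[OF assms(1), of k l] \<open>k < l\<close> by simp
qed

lemma P_of_weight_curve:
  assumes "infinite (UNIV :: 'k::field set)" and "weight_decomp D (C :: nat \<Rightarrow> 'k^'n^'n)"
  shows "P_of (weight_curve N D C) = {g \<in> GL. nonneg_weights C g}"
  unfolding P_of_def using has_limit_weight_curve_iff[OF assms] by auto

lemma L_of_weight_curve:
  assumes "infinite (UNIV :: 'k::field set)" and "weight_decomp D (C :: nat \<Rightarrow> 'k^'n^'n)"
  shows "L_of (weight_curve N D C) = {g \<in> GL. \<forall>k. C k ** g = g ** C k}"
proof -
  have "has_limit (weight_curve N D C) g g \<longleftrightarrow> (\<forall>k. C k ** g = g ** C k)" for g
    using has_limit_weight_curve_iff[OF assms, of N g g] weight_part_eq_self_iff[OF assms(2), of g]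
      nonneg_weights_if_commute[OF assms(2), of g] by auto
  then show ?thesis unfolding L_of_def by simp
qed

lemma nonneg_weights_add: "nonneg_weights C A \<Longrightarrow> nonneg_weights C B \<Longrightarrow> nonneg_weights C (A + B)"
  unfolding nonneg_weights_def by (simp add: matrix_add_ldistrib matrix_add_rdistrib)

lemma nonneg_weights_diff: "nonneg_weights C A \<Longrightarrow> nonneg_weights C B \<Longrightarrow> nonneg_weights C (A - B)"
  unfolding nonneg_weights_def by (simp add: matrix_diff_ldistrib matrix_diff_rdistrib)

lemma nonneg_weights_scale: "nonneg_weights C A \<Longrightarrow> nonneg_weights C (scale_mat c A)"
  unfolding nonneg_weights_def by simp

lemma nonneg_weights_one: "weight_decomp D C \<Longrightarrow> nonneg_weights C (mat 1)"
  by (rule nonneg_weights_if_commute) simp_all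

text \<open>Nonnegativity of weights is linear, and \<open>Y = c\<inverse> ((mat 1 + c Y) - mat 1)\<close> where
  \<open>mat 1 + c Y\<close> is invertible for all but finitely many \<open>c\<close>.\<close>
lemma nonneg_weights_transfer:
  assumes "infinite (UNIV :: 'k::field set)"
    and dc: "weight_decomp D C" and de: "weight_decomp D' (E :: nat \<Rightarrow> 'k^'n^'n)"
    and GL: "\<And>g. g \<in> GL \<Longrightarrow> nonneg_weights C g \<Longrightarrow> nonneg_weights E g"
    and "nonneg_weights C Y"
  shows "nonneg_weights E Y"
proof -
  obtain c where "c \<noteq> 0" and inv: "invertible (mat 1 + scale_mat c Y)"
    using invertible_one_plus_scale[OF assms(1)] by blast
  have "nonneg_weights C (mat 1 + scale_mat c Y)"
    by (intro nonneg_weights_add nonneg_weights_one[OF dc] nonneg_weights_scale assms(5))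
  then have "nonneg_weights E (mat 1 + scale_mat c Y)" using GL inv unfolding GL_def by blast
  then have "nonneg_weights E (mat 1 + scale_mat c Y - mat 1)"
    using nonneg_weights_diff nonneg_weights_one[OF de] by blast
  then have "nonneg_weights E (scale_mat c Y)" by simp
  then have "nonneg_weights E (scale_mat (inverse c) (scale_mat c Y))" by (rule nonneg_weights_scale)
  then show ?thesis using \<open>c \<noteq> 0\<close> by simp
qed

lemma nonneg_weights_eq_if_P_of_eq:
  assumes inf: "infinite (UNIV :: 'k::field set)"
    and dc: "weight_decomp D C" and de: "weight_decomp D' (E :: nat \<Rightarrow> 'k^'n^'n)"
    and "P_of (weight_curve N D C) = P_of (weight_curve N' D' E)"
  shows "nonneg_weights C Y \<longleftrightarrow> nonneg_weights E Y"
  using nonneg_weights_transfer[OF inf dc de] nonneg_weights_transfer[OF inf de dc] assms(4)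
  unfolding P_of_weight_curve[OF inf dc] P_of_weight_curve[OF inf de] by blast

definition weight_flag :: "nat \<Rightarrow> (nat \<Rightarrow> 'k::field^'n^'n) \<Rightarrow> nat \<Rightarrow> 'k^'n^'n" where
  "weight_flag D C w = (\<Sum>k\<in>{w..D}. C k)"

lemma weight_flag_mult_weight:
  assumes "weight_decomp D C"
  shows "weight_flag D C w ** C l = (if w \<le> l \<and> l \<le> D then C l else 0)"
    and "C l ** weight_flag D C w = (if w \<le> l \<and> l \<le> D then C l else 0)"
proof -
  have "weight_flag D C w ** C l = (\<Sum>k\<in>{w..D}. if k = l then C l else 0)"
    unfolding weight_flag_def sum_matrix_mult using weight_decompD(2)[OF assms]
    by (intro sum.cong refl) auto
  then show "weight_flag D C w ** C l = (if w \<le> l \<and> l \<le> D then C l else 0)"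
    by (simp add: sum.delta')
  have "C l ** weight_flag D C w = (\<Sum>k\<in>{w..D}. if l = k then C l else 0)"
    unfolding weight_flag_def matrix_mult_sum using weight_decompD(2)[OF assms]
    by (intro sum.cong refl) auto
  then show "C l ** weight_flag D C w = (if w \<le> l \<and> l \<le> D then C l else 0)"
    by (simp add: sum.delta)
qed

lemma weight_flag_mult_mono:
  assumes "weight_decomp D C" and "j \<le> w"
  shows "weight_flag D C j ** weight_flag D C w = weight_flag D C w"
  unfolding weight_flag_def[of D C w] matrix_mult_sum
  using assms(2) by (intro sum.cong refl) (auto simp: weight_flag_mult_weight[OF assms(1)])

lemma weight_flag_Suc: "k \<le> D \<Longrightarrow> weight_flag D C k = C k + weight_flag D C (Suc k)"
  unfolding weight_flag_def by (simp add: Icc_eq_insert_lb_nat)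

lemma weight_flag_commute: "(\<And>k. C k ** Z = Z ** C k) \<Longrightarrow> weight_flag D C w ** Z = Z ** weight_flag D C w"
  unfolding weight_flag_def by (rule commute_sum)

lemma one_minus_weight_flag:
  assumes "weight_decomp D C"
  shows "mat 1 - weight_flag D C w = (\<Sum>k\<in>{k. k \<le> D \<and> k < w}. C k)"
proof -
  have "{..D} = {k. k \<le> D \<and> k < w} \<union> {w..D}" and "{k. k \<le> D \<and> k < w} \<inter> {w..D} = {}" by auto
  then have "(\<Sum>k\<le>D. C k) = (\<Sum>k\<in>{k. k \<le> D \<and> k < w}. C k) + weight_flag D C w"
    unfolding weight_flag_def by (simp add: sum.union_disjoint)
  then show ?thesis using weight_decompD(3)[OF assms] by (simp add: algebra_simps)
qed

text \<open>\<open>(mat 1 - F) ** Y ** F = 0\<close> says that \<open>Y\<close> maps the image of the idempotent \<open>F\<close>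
  into itself.\<close>
lemma nonneg_weights_iff_flag:
  assumes dc: "weight_decomp D C"
  shows "nonneg_weights C Y \<longleftrightarrow> (\<forall>w. (mat 1 - weight_flag D C w) ** Y ** weight_flag D C w = 0)"
proof
  assume nonneg: "nonneg_weights C Y"
  show "\<forall>w. (mat 1 - weight_flag D C w) ** Y ** weight_flag D C w = 0"
  proof
    fix w
    have "(mat 1 - weight_flag D C w) ** Y ** weight_flag D C w =
        (\<Sum>k\<in>{k. k \<le> D \<and> k < w}. \<Sum>l\<in>{w..D}. C k ** Y ** C l)"
      unfolding one_minus_weight_flag[OF dc] unfolding weight_flag_def
      by (simp only: sum_matrix_mult, simp only: matrix_mult_sum)
    also have "\<dots> = 0" using nonneg unfolding nonneg_weights_def by (intro sum.neutral ballI) auto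
    finally show "(mat 1 - weight_flag D C w) ** Y ** weight_flag D C w = 0" .
  qed
next
  assume flag: "\<forall>w. (mat 1 - weight_flag D C w) ** Y ** weight_flag D C w = 0"
  show "nonneg_weights C Y" unfolding nonneg_weights_def
  proof (intro allI impI)
    fix k l :: nat assume "k < l"
    show "C k ** Y ** C l = 0"
    proof (cases "l \<le> D")
      case False then show ?thesis using weight_decompD(1)[OF dc, of l] by simp
    next
      case True
      have "C k ** (mat 1 - weight_flag D C l) = C k" and "weight_flag D C l ** C l = C l"
        using \<open>k < l\<close> True by (simp_all add: matrix_diff_ldistrib weight_flag_mult_weight[OF dc])
      then have "C k ** Y ** C l =
          C k ** ((mat 1 - weight_flag D C l) ** Y ** weight_flag D C l) ** C l"
        by (metis matrix_mul_assoc)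
      then show ?thesis using flag by simp
    qed
  qed
qed

lemma stabilizer_eq_if_same_image:
  fixes P Q Y :: "'k::field^'n^'n"
  assumes "P ** Q = Q" and "Q ** P = P"
  shows "(mat 1 - P) ** Y ** P = 0 \<longleftrightarrow> (mat 1 - Q) ** Y ** Q = 0"
proof -
  have "(mat 1 - B) ** Y ** B = 0" if "A ** B = B" "B ** A = A" "(mat 1 - A) ** Y ** A = 0"
    for A B :: "'k^'n^'n"
  proof -
    have "(mat 1 - B) ** (mat 1 - A) = mat 1 - B"
      using that(2) by (simp add: matrix_diff_ldistrib matrix_diff_rdistrib)
    then have "(mat 1 - B) ** Y ** B = (mat 1 - B) ** ((mat 1 - A) ** Y ** A) ** B"
      using that(1) by (metis matrix_mul_assoc)
    then show ?thesis using that(3) by simp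
  qed
  then show ?thesis using assms by blast
qed

definition same_flags :: "nat \<Rightarrow> (nat \<Rightarrow> 'k::field^'n^'n) \<Rightarrow> (nat \<Rightarrow> 'k^'n^'n) \<Rightarrow> bool" where
  "same_flags D C G \<longleftrightarrow> (\<forall>w. weight_flag D C w ** weight_flag D G w = weight_flag D G w \<and>
     weight_flag D G w ** weight_flag D C w = weight_flag D C w)"

lemma nonneg_weights_eq_if_same_flags:
  assumes "weight_decomp D C" and "weight_decomp D G" and "same_flags D C G"
  shows "nonneg_weights G Y \<longleftrightarrow> nonneg_weights C Y"
  unfolding nonneg_weights_iff_flag[OF assms(1)] nonneg_weights_iff_flag[OF assms(2)]
  using stabilizer_eq_if_same_image assms(3) unfolding same_flags_def by blast

section \<open>Averaging one cocharacter over another\<close>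

lemma sum_selected_weights_mult:
  assumes "weight_decomp D' E"
  shows "(\<Sum>m\<le>D'. if P m then E m else 0) ** (\<Sum>m\<le>D'. if Q m then E m else 0) =
    (\<Sum>m\<le>D'. if P m \<and> Q m then E m else 0)"
proof -
  have "(\<Sum>m\<le>D'. if P m then E m else 0) ** (\<Sum>m\<le>D'. if Q m then E m else 0) =
      (\<Sum>m\<le>D'. \<Sum>m'\<le>D'. (if P m then E m else 0) ** (if Q m' then E m' else 0))"
    by (simp only: sum_matrix_mult, simp only: matrix_mult_sum)
  also have "\<dots> = (\<Sum>m\<le>D'. \<Sum>m'\<le>D'. if m = m' then (if P m \<and> Q m then E m else 0) else 0)"
    using weight_decompD(2)[OF assms] by (intro sum.cong refl) auto
  finally show ?thesis by (simp add: sum.delta)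
qed

lemma weight_flag_absorbs_or_annihilates:
  assumes dc: "weight_decomp D C" and de: "weight_decomp D' E"
    and same: "\<And>Y. nonneg_weights C Y \<longleftrightarrow> nonneg_weights E Y"
  shows "weight_flag D C w ** E m = E m \<or> E m ** weight_flag D C w = 0"
proof -
  let ?F = "weight_flag D C w"
  have "nonneg_weights E (E m ** X ** E m)" for X
    unfolding nonneg_weights_def
  proof (intro allI impI)
    fix k l :: nat assume "k < l"
    have "E k ** (E m ** X ** E m) ** E l = (E k ** E m) ** X ** (E m ** E l)"
      by (simp add: matrix_mul_assoc)
    then show "E k ** (E m ** X ** E m) ** E l = 0" using weight_decompD(2)[OF de] \<open>k < l\<close> by auto
  qed
  then have "(mat 1 - ?F) ** (E m ** X ** E m) ** ?F = 0" for X
    using same nonneg_weights_iff_flag[OF dc] by blast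
  then have "\<forall>X. ((mat 1 - ?F) ** E m) ** X ** (E m ** ?F) = 0" by (simp add: matrix_mul_assoc)
  then have "(mat 1 - ?F) ** E m = 0 \<or> E m ** ?F = 0" by (rule sandwiches_eq_0_imp)
  then show ?thesis by (auto simp: matrix_diff_rdistrib)
qed

lemma averaged_weight_flag:
  assumes dc: "weight_decomp D C" and de: "weight_decomp D' E"
    and same: "\<And>Y. nonneg_weights C Y \<longleftrightarrow> nonneg_weights E Y"
  shows "weight_flag D (\<lambda>k. weight_part D' E (C k)) w =
    (\<Sum>m\<le>D'. if weight_flag D C w ** E m = E m then E m else 0)"
proof -
  have "E m ** weight_flag D C w ** E m = (if weight_flag D C w ** E m = E m then E m else 0)" for m
  proof (cases "weight_flag D C w ** E m = E m")
    case True
    then show ?thesis using weight_decompD(2)[OF de, of m m] by (simp add: matrix_mul_assoc[symmetric])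
  next
    case False
    then show ?thesis using weight_flag_absorbs_or_annihilates[OF dc de same, of w m] by simp
  qed
  moreover have "weight_flag D (\<lambda>k. weight_part D' E (C k)) w =
      (\<Sum>m\<le>D'. E m ** weight_flag D C w ** E m)"
    unfolding weight_flag_def weight_part_def
    by (subst sum.swap) (simp only: sum_matrix_mult matrix_mult_sum)
  ultimately show ?thesis by simp
qed

lemma averaged_weight_eq:
  assumes dc: "weight_decomp D C" and de: "weight_decomp D' E"
    and same: "\<And>Y. nonneg_weights C Y \<longleftrightarrow> nonneg_weights E Y" and "k \<le> D"
  shows "weight_part D' E (C k) = (\<Sum>m\<le>D'.
    if weight_flag D C k ** E m = E m \<and> weight_flag D C (Suc k) ** E m \<noteq> E m then E m else 0)"
proof -
  have mono: "weight_flag D C k ** E m = E m" if "weight_flag D C (Suc k) ** E m = E m" for m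
    using that weight_flag_mult_mono[OF dc, of k "Suc k"] by (metis matrix_mul_assoc le_SucI order_refl)
  have "weight_part D' E (C k) = weight_flag D (\<lambda>k. weight_part D' E (C k)) k -
      weight_flag D (\<lambda>k. weight_part D' E (C k)) (Suc k)"
    using weight_flag_Suc[OF \<open>k \<le> D\<close>, of "\<lambda>k. weight_part D' E (C k)"] by simp
  also have "\<dots> = (\<Sum>m\<le>D'.
      if weight_flag D C k ** E m = E m \<and> weight_flag D C (Suc k) ** E m \<noteq> E m then E m else 0)"
    unfolding averaged_weight_flag[OF dc de same] sum_subtractf[symmetric] using mono
    by (intro sum.cong refl) auto
  finally show ?thesis .
qed

lemma averaged_weight_decomp:
  assumes dc: "weight_decomp D C" and de: "weight_decomp D' E"
    and same: "\<And>Y. nonneg_weights C Y \<longleftrightarrow> nonneg_weights E Y"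
  defines "G \<equiv> \<lambda>k. weight_part D' E (C k)"
  shows "weight_decomp D G" and "(\<And>m. E m ** h = h ** E m) \<Longrightarrow> G k ** h = h ** G k"
proof -
  define absorbed where "absorbed w m \<longleftrightarrow> weight_flag D C w ** E m = E m" for w m
  have mono: "absorbed j m" if "j \<le> w" "absorbed w m" for j w m
    using that weight_flag_mult_mono[OF dc that(1)] unfolding absorbed_def by (metis matrix_mul_assoc)
  have vanish: "G k = 0" if "D < k" for k
    using weight_decompD(1)[OF dc that] unfolding G_def weight_part_def by simp
  have G: "G k = (\<Sum>m\<le>D'. if absorbed k m \<and> \<not> absorbed (Suc k) m then E m else 0)" if "k \<le> D" for k
    unfolding G_def absorbed_def by (rule averaged_weight_eq[OF dc de same that])
  have "G k ** G l = (if k = l then G k else 0)" for k l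
  proof (cases "k \<le> D \<and> l \<le> D")
    case True
    then have "G k ** G l = (\<Sum>m\<le>D'. if (absorbed k m \<and> \<not> absorbed (Suc k) m) \<and>
        (absorbed l m \<and> \<not> absorbed (Suc l) m) then E m else 0)"
      using G[of k] G[of l] sum_selected_weights_mult[OF de] by simp
    also have "\<dots> = (if k = l then G k else 0)"
    proof (cases "k = l")
      case True
      then show ?thesis using G \<open>k \<le> D \<and> l \<le> D\<close> by (simp add: conj_absorb)
    next
      case False
      then have "\<not> ((absorbed k m \<and> \<not> absorbed (Suc k) m) \<and> (absorbed l m \<and> \<not> absorbed (Suc l) m))" for m
        using mono[of "Suc k" l m] mono[of "Suc l" k m] by (cases "k < l") auto
      then show ?thesis using False by (simp only: if_False) (intro sum.neutral, auto)
    qed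
    finally show ?thesis .
  qed (use vanish in auto)
  moreover have "(\<Sum>k\<le>D. G k) = mat 1"
  proof -
    have "(\<Sum>k\<le>D. G k) = (\<Sum>m\<le>D'. E m ** (\<Sum>k\<le>D. C k) ** E m)"
      unfolding G_def weight_part_def by (subst sum.swap) (simp only: sum_matrix_mult matrix_mult_sum)
    then show ?thesis using weight_decompD(2,3)[OF de] weight_decompD(3)[OF dc] by simp
  qed
  ultimately show "weight_decomp D G" unfolding weight_decomp_def using vanish by blast
  show "G k ** h = h ** G k" if "\<And>m. E m ** h = h ** E m"
    using G[of k] vanish[of k] that by (cases "k \<le> D") (auto intro!: commute_sum)
qed

lemma averaged_same_flags:
  assumes dc: "weight_decomp D C" and de: "weight_decomp D' E"
    and same: "\<And>Y. nonneg_weights C Y \<longleftrightarrow> nonneg_weights E Y"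
  shows "same_flags D C (\<lambda>k. weight_part D' E (C k))"
  unfolding same_flags_def averaged_weight_flag[OF dc de same]
proof
  fix w
  have "weight_flag D C w ** (\<Sum>m\<le>D'. if weight_flag D C w ** E m = E m then E m else 0) =
      (\<Sum>m\<le>D'. if weight_flag D C w ** E m = E m then E m else 0)"
    unfolding matrix_mult_sum by (intro sum.cong refl) auto
  moreover have "(\<Sum>m\<le>D'. if weight_flag D C w ** E m = E m then E m else 0) ** weight_flag D C w =
      (\<Sum>m\<le>D'. E m) ** weight_flag D C w"
    unfolding sum_matrix_mult using weight_flag_absorbs_or_annihilates[OF dc de same]
    by (intro sum.cong refl) auto
  ultimately show "weight_flag D C w ** (\<Sum>m\<le>D'. if weight_flag D C w ** E m = E m then E m else 0) =
      (\<Sum>m\<le>D'. if weight_flag D C w ** E m = E m then E m else 0) \<and>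
    (\<Sum>m\<le>D'. if weight_flag D C w ** E m = E m then E m else 0) ** weight_flag D C w = weight_flag D C w"
    using weight_decompD(3)[OF de] by simp
qed

lemma poly_fun_poly_mat:
  fixes P :: "'n::finite \<Rightarrow> 'n \<Rightarrow> 'k::field poly"
  assumes "f \<in> poly_fun"
  shows "\<exists>q. \<forall>b. f (poly_mat P b) = poly q b"
  using assms
proof (induct rule: poly_fun.induct)
  case (const c) show ?case by (rule exI[of _ "[:c:]"]) simp
next
  case (coord i j) show ?case by (rule exI[of _ "P i j"]) simp
next
  case (add f g)
  then obtain q1 q2 where "\<forall>b. f (poly_mat P b) = poly q1 b" "\<forall>b. g (poly_mat P b) = poly q2 b" by blast
  then show ?case by (intro exI[of _ "q1 + q2"]) simp
next
  case (mult f g)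
  then obtain q1 q2 where "\<forall>b. f (poly_mat P b) = poly q1 b" "\<forall>b. g (poly_mat P b) = poly q2 b" by blast
  then show ?case by (intro exI[of _ "q1 * q2"]) simp
qed

lemma has_limit_in_zariski_closed:
  assumes inf: "infinite (UNIV :: 'k::field set)" and "zariski_closed Z"
    and lim: "has_limit lam X L"
    and conj: "\<And>b. b \<noteq> 0 \<Longrightarrow> lam b ** X ** matrix_inv (lam b) \<in> (Z :: ('k^'n^'n) set)"
  shows "L \<in> Z"
proof -
  obtain F where F: "F \<subseteq> poly_fun" "Z = {A. \<forall>f\<in>F. f A = 0}"
    using assms(2) unfolding zariski_closed_def by blast
  obtain P where P: "\<And>b. b \<noteq> 0 \<Longrightarrow> lam b ** X ** matrix_inv (lam b) = poly_mat P b"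
    and L: "L = poly_mat P 0"
    using lim unfolding has_limit_def by (auto simp: vec_eq_iff)
  have "f L = 0" if f: "f \<in> F" for f
  proof -
    obtain q where q: "\<forall>b. f (poly_mat P b) = poly q b" using poly_fun_poly_mat F(1) f by blast
    have "\<forall>b. b \<noteq> 0 \<longrightarrow> poly q b = 0"
    proof (intro allI impI)
      fix b :: 'k assume "b \<noteq> 0"
      then have "poly_mat P b \<in> Z" using conj P by simp
      then have "f (poly_mat P b) = 0" using F(2) f by blast
      then show "poly q b = 0" using q by simp
    qed
    then have "q = 0" by (rule poly_eq_0_if_zero_on_nonzero[OF inf])
    then show ?thesis using q L by simp
  qed
  then show ?thesis using F(2) by blast
qed

lemma weight_curve_commute_weight:
  assumes "weight_decomp D C"
  shows "C k ** weight_curve N D C a = weight_curve N D C a ** C k"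
  unfolding weight_curve_def matrix_mult_sum sum_matrix_mult
  using weight_decompD(2)[OF assms] by (intro sum.cong refl) simp

lemma weight_curve_nonneg_weights:
  "weight_decomp D C \<Longrightarrow> nonneg_weights C (weight_curve N D C a)"
  by (intro nonneg_weights_if_commute) (simp_all add: weight_curve_commute_weight)

lemma weight_curve_weight_part:
  "weight_curve N D (\<lambda>k. weight_part D' E (C k)) a = weight_part D' E (weight_curve N D C a)"
proof -
  have "weight_curve N D (\<lambda>k. weight_part D' E (C k)) a =
      (\<Sum>k\<le>D. \<Sum>m\<le>D'. scale_mat (a ^ k / a ^ N) (E m ** C k ** E m))"
    unfolding weight_curve_def weight_part_def by (simp only: scale_mat_sum)
  also have "\<dots> = (\<Sum>m\<le>D'. \<Sum>k\<le>D. scale_mat (a ^ k / a ^ N) (E m ** C k ** E m))"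
    by (rule sum.swap)
  also have "\<dots> = weight_part D' E (weight_curve N D C a)"
    unfolding weight_curve_def weight_part_def
    by (simp only: sum_matrix_mult matrix_mult_sum scale_mat_mult_left scale_mat_mult_right)
  finally show ?thesis .
qed

lemma weight_part_commute:
  assumes "\<And>m. E m ** Z = Z ** E m" and "X ** Z = Z ** X"
  shows "weight_part D' E X ** Z = Z ** weight_part D' E X"
  unfolding weight_part_def
proof (rule commute_sum)
  fix m
  have "E m ** X ** E m ** Z = E m ** X ** (Z ** E m)" using assms(1) by (simp add: matrix_mul_assoc[symmetric])
  also have "\<dots> = E m ** (X ** Z) ** E m" by (simp only: matrix_mul_assoc)
  also have "\<dots> = E m ** (Z ** X) ** E m" using assms(2) by simp
  also have "\<dots> = Z ** (E m ** X ** E m)" using assms(1) by (simp add: matrix_mul_assoc)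
  finally show "E m ** X ** E m ** Z = Z ** (E m ** X ** E m)" .
qed

lemma weight_part_mult_fixed:
  assumes de: "weight_decomp D' E" and "\<And>m. E m ** Z = Z ** E m" and "X ** Z = Z"
  shows "weight_part D' E X ** Z = Z"
proof -
  have "E m ** X ** E m ** Z = Z ** E m" for m
  proof -
    have "E m ** X ** E m ** Z = E m ** (X ** Z) ** E m"
      using assms(2) by (simp add: matrix_mul_assoc) (simp add: matrix_mul_assoc[symmetric])
    also have "\<dots> = Z ** (E m ** E m)" using assms(2,3) by (simp add: matrix_mul_assoc)
    finally show ?thesis using weight_decompD(2)[OF de, of m m] by simp
  qed
  then have "weight_part D' E X ** Z = Z ** (\<Sum>m\<le>D'. E m)"
    unfolding weight_part_def sum_matrix_mult matrix_mult_sum by simp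
  then show ?thesis using weight_decompD(3)[OF de] by simp
qed

text \<open>The averaged cocharacter is \<open>\<nu> a = lim\<^sub>b\<^sub>\<rightarrow>\<^sub>0 \<mu> b ** \<lambda> a ** (\<mu> b)\<inverse>\<close>,
  hence it lies in every Zariski-closed set containing these conjugates.\<close>
lemma averaged_cocharacter:
  assumes inf: "infinite (UNIV :: 'k::field set)"
    and dc: "weight_decomp D C" and de: "weight_decomp D' (E :: nat \<Rightarrow> 'k^'n^'n)"
    and P_eq: "P_of (weight_curve N D C) = P_of (weight_curve N' D' E)"
  defines "G \<equiv> \<lambda>k. weight_part D' E (C k)"
  shows "weight_decomp D G"
    and "P_of (weight_curve N D G) = P_of (weight_curve N D C)"
    and "L_of (weight_curve N' D' E) \<subseteq> L_of (weight_curve N D G)"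
    and "zariski_closed Z \<Longrightarrow> (\<And>a b. a \<noteq> 0 \<Longrightarrow> b \<noteq> 0 \<Longrightarrow>
      weight_curve N' D' E b ** weight_curve N D C a ** matrix_inv (weight_curve N' D' E b) \<in> Z) \<Longrightarrow>
      a \<noteq> 0 \<Longrightarrow> weight_curve N D G a \<in> Z"
proof -
  have same: "nonneg_weights C Y \<longleftrightarrow> nonneg_weights E Y" for Y
    by (rule nonneg_weights_eq_if_P_of_eq[OF inf dc de P_eq])
  note avg = averaged_weight_decomp[OF dc de same, folded G_def]
  show dG: "weight_decomp D G" by (rule avg(1))
  show "P_of (weight_curve N D G) = P_of (weight_curve N D C)"
    unfolding P_of_weight_curve[OF inf dG] P_of_weight_curve[OF inf dc]
    by (simp add: nonneg_weights_eq_if_same_flags[OF dc dG averaged_same_flags[OF dc de same, folded G_def]])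
  show "L_of (weight_curve N' D' E) \<subseteq> L_of (weight_curve N D G)"
    unfolding L_of_weight_curve[OF inf dG] L_of_weight_curve[OF inf de]
  proof safe
    fix g k assume "\<forall>k. E k ** g = g ** E k"
    then show "G k ** g = g ** G k" unfolding G_def by (intro avg(2)) simp
  qed
  assume Z: "zariski_closed Z" and conj: "\<And>a b. a \<noteq> 0 \<Longrightarrow> b \<noteq> 0 \<Longrightarrow>
      weight_curve N' D' E b ** weight_curve N D C a ** matrix_inv (weight_curve N' D' E b) \<in> Z"
    and "a \<noteq> 0"
  have "nonneg_weights E (weight_curve N D C a)"
    using weight_curve_nonneg_weights[OF dc, of N a] same by simp
  then have "has_limit (weight_curve N' D' E) (weight_curve N D C a) (weight_curve N D G a)"
    unfolding G_def weight_curve_weight_part by (rule has_limit_weight_curveI[OF de])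
  then show "weight_curve N D G a \<in> Z"
    by (rule has_limit_in_zariski_closed[OF inf Z]) (rule conj[OF \<open>a \<noteq> 0\<close>])
qed

section \<open>Block decompositions\<close>

text \<open>The weights of \<open>C\<close> on the image of the idempotent \<open>Q\<close> and weight zero (index \<open>N\<close>)
  on its complement: the restriction of a cocharacter to one block.\<close>
definition restrict_weights :: "'k::field^'n^'n \<Rightarrow> nat \<Rightarrow> (nat \<Rightarrow> 'k^'n^'n) \<Rightarrow> nat \<Rightarrow> 'k^'n^'n"
  where "restrict_weights Q N C k = C k ** Q + (if k = N then mat 1 - Q else 0)"

lemma restrict_weights_commute:
  assumes "C k ** Z = Z ** C k" and "Q ** Z = Z ** Q"
  shows "restrict_weights Q N C k ** Z = Z ** restrict_weights Q N C k"
proof -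
  have "C k ** Q ** Z = C k ** (Z ** Q)" using assms(2) by (simp add: matrix_mul_assoc[symmetric])
  also have "\<dots> = Z ** (C k ** Q)" using assms(1) by (simp add: matrix_mul_assoc)
  finally show ?thesis unfolding restrict_weights_def
    using assms(2) by (simp add: matrix_add_rdistrib matrix_add_ldistrib matrix_diff_rdistrib
        matrix_diff_ldistrib)
qed

lemma restrict_weights_mult_proj:
  "Q ** Q = Q \<Longrightarrow> restrict_weights Q N C k ** Q = C k ** Q"
  unfolding restrict_weights_def
  by (simp add: matrix_add_rdistrib matrix_diff_rdistrib matrix_mul_assoc[symmetric])

context
  fixes Q :: "'k::field^'n^'n" and C :: "nat \<Rightarrow> 'k^'n^'n" and D N :: nat
  assumes dc: "weight_decomp D C" and "N \<le> D"
    and idem: "Q ** Q = Q" and comm: "\<And>k. C k ** Q = Q ** C k"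
begin

lemma weight_decomp_restrict_weights: "weight_decomp D (restrict_weights Q N C)"
  unfolding weight_decomp_def
proof (intro conjI allI impI)
  fix k assume "D < k"
  then show "restrict_weights Q N C k = 0"
    unfolding restrict_weights_def using weight_decompD(1)[OF dc] \<open>N \<le> D\<close> by auto
next
  fix k l
  have r1: "Q ** C l = C l ** Q" and r2: "Q ** (C l ** X) = C l ** (Q ** X)"
    and r3: "Q ** (Q ** X) = Q ** X" and r4: "C k ** (C l ** X) = (if k = l then C k ** X else 0)"
    for l X
    using comm idem weight_decompD(2)[OF dc, of k l] by (simp_all add: matrix_mul_assoc)
  show "restrict_weights Q N C k ** restrict_weights Q N C l =
      (if k = l then restrict_weights Q N C k else 0)"
    unfolding restrict_weights_def
    by (simp add: matrix_add_ldistrib matrix_add_rdistrib matrix_diff_ldistrib matrix_diff_rdistrib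
        matrix_mul_assoc[symmetric] r1 r2 r3 r4 idem weight_decompD(2)[OF dc])
next
  have "(\<Sum>k\<le>D. restrict_weights Q N C k) =
      (\<Sum>k\<le>D. C k) ** Q + (\<Sum>k\<le>D. if k = N then mat 1 - Q else 0)"
    unfolding restrict_weights_def by (simp add: sum.distrib sum_matrix_mult)
  then show "(\<Sum>k\<le>D. restrict_weights Q N C k) = mat 1"
    using weight_decompD(3)[OF dc] \<open>N \<le> D\<close> by simp
qed

lemma weight_curve_restrict_weights:
  assumes "a \<noteq> 0"
  shows "weight_curve N D (restrict_weights Q N C) a = weight_curve N D C a ** Q + (mat 1 - Q)"
proof -
  have "weight_curve N D (restrict_weights Q N C) a =
      (\<Sum>k\<le>D. scale_mat (a ^ k / a ^ N) (C k) ** Q) +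
      (\<Sum>k\<le>D. scale_mat (a ^ k / a ^ N) (if k = N then mat 1 - Q else 0))"
    unfolding weight_curve_def restrict_weights_def by (simp add: scale_mat_add sum.distrib)
  also have "(\<Sum>k\<le>D. scale_mat (a ^ k / a ^ N) (if k = N then mat 1 - Q else 0)) = mat 1 - Q"
    using assms \<open>N \<le> D\<close> by (simp add: if_distrib cong: if_cong)
  finally show ?thesis unfolding weight_curve_def by (simp add: sum_matrix_mult)
qed

lemma nonneg_weights_restrict_weights:
  assumes "nonneg_weights C h" and hQ: "h ** Q = Q ** h"
  shows "nonneg_weights (restrict_weights Q N C) h"
  unfolding nonneg_weights_def
proof (intro allI impI)
  fix k l :: nat assume "k < l"
  have r1: "Q ** h = h ** Q" "Q ** (h ** X) = h ** (Q ** X)" for X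
    using hQ by (simp_all add: matrix_mul_assoc)
  have r2: "Q ** C j = C j ** Q" "Q ** (C j ** X) = C j ** (Q ** X)" for j X
    using comm by (simp_all add: matrix_mul_assoc)
  have r3: "Q ** (Q ** X) = Q ** X" for X using idem by (simp add: matrix_mul_assoc)
  have "C k ** (h ** C l) = 0" using assms(1) \<open>k < l\<close> unfolding nonneg_weights_def
    by (simp add: matrix_mul_assoc)
  then have chc: "C k ** (h ** C l) = 0" "C k ** (h ** (C l ** X)) = 0" for X
    by (simp_all add: matrix_mul_assoc)
  show "restrict_weights Q N C k ** h ** restrict_weights Q N C l = 0"
    unfolding restrict_weights_def using \<open>k < l\<close>
    by (simp add: matrix_add_ldistrib matrix_add_rdistrib matrix_diff_ldistrib matrix_diff_rdistrib
        matrix_mul_assoc[symmetric] r1 r2 r3 idem chc)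
qed

end

lemma sum_matrix_vector_mult: "(\<Sum>x\<in>S. (f x::'k::field^'n^'n)) *v v = (\<Sum>x\<in>S. f x *v v)"
  by (induct S rule: infinite_finite_induct) (auto simp: matrix_vector_mult_add_rdistrib)

lemma matrix_vector_mult_sum: "(A::'k::field^'n^'n) *v (\<Sum>x\<in>S. f x) = (\<Sum>x\<in>S. A *v f x)"
  by (induct S rule: infinite_finite_induct) (auto simp: matrix_vector_right_distrib)

lemma scalar_mult_sum: "c *s (\<Sum>i\<in>S. f i) = (\<Sum>i\<in>S. c *s (f i :: 'k::field^'n))"
  by (simp add: vec_eq_iff sum_component sum_distrib_left)

locale direct_sum =
  fixes n :: nat and W :: "nat \<Rightarrow> ('k::field^'n) set"
  assumes direct_sum: "direct_sum_decomp n W"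
begin

definition block_component :: "'k^'n \<Rightarrow> nat \<Rightarrow> 'k^'n" where
  "block_component v = (SOME vs. (\<forall>i<n. vs i \<in> W i) \<and> v = (\<Sum>i<n. vs i))"

definition block_proj :: "nat \<Rightarrow> 'k^'n^'n" where
  "block_proj j = (\<chi> r s. block_component (axis s 1) j $ r)"

lemma subspace: "i < n \<Longrightarrow> is_subspace (W i)"
  using direct_sum unfolding direct_sum_decomp_def by simp

lemma decomposition_exists: "\<exists>vs. (\<forall>i<n. vs i \<in> W i) \<and> v = (\<Sum>i<n. vs i)"
  using direct_sum unfolding direct_sum_decomp_def by (elim conjE) (rule spec)

lemma decomposition_zero:
  assumes "\<forall>i<n. vs i \<in> W i" and "(\<Sum>i<n. vs i) = 0" and "i < n"
  shows "vs i = 0"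
proof -
  have "\<forall>vs. (\<forall>i<n. vs i \<in> W i) \<and> (\<Sum>i<n. vs i) = 0 \<longrightarrow> (\<forall>i<n. vs i = 0)"
    using direct_sum unfolding direct_sum_decomp_def by (elim conjE)
  then show ?thesis using assms by simp
qed

lemma subspace_sum: "i < n \<Longrightarrow> (\<And>x. x \<in> S \<Longrightarrow> f x \<in> W i) \<Longrightarrow> (\<Sum>x\<in>S. f x) \<in> W i"
  by (induct S rule: infinite_finite_induct) (auto dest: subspace simp: is_subspace_def)

lemma subspace_diff:
  assumes "i < n" and "v \<in> W i" and "w \<in> W i"
  shows "v - w \<in> W i"
proof -
  have "v + (-1) *s w \<in> W i" using subspace[OF assms(1)] assms(2,3) unfolding is_subspace_def by blast
  moreover have "v + (-1) *s w = v - w" by (simp add: vec_eq_iff)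
  ultimately show ?thesis by simp
qed

lemma block_component_spec: "(\<forall>i<n. block_component v i \<in> W i) \<and> v = (\<Sum>i<n. block_component v i)"
  unfolding block_component_def by (rule someI_ex[OF decomposition_exists])

lemma block_component_unique:
  assumes "\<forall>i<n. vs i \<in> W i" and "v = (\<Sum>i<n. vs i)" and "i < n"
  shows "block_component v i = vs i"
proof -
  have "\<forall>i<n. block_component v i - vs i \<in> W i"
    using subspace_diff block_component_spec[of v] assms(1) by simp
  moreover have "(\<Sum>i<n. block_component v i - vs i) = 0"
    using block_component_spec[of v] assms(2) by (simp add: sum_subtractf)
  ultimately have "block_component v i - vs i = 0" by (rule decomposition_zero[OF _ _ assms(3)])
  then show ?thesis by simp
qed

lemma block_component_of_mem:
  assumes "j < n" and "v \<in> W j" and "l < n"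
  shows "block_component v l = (if l = j then v else 0)"
proof (rule block_component_unique)
  show "\<forall>i<n. (if i = j then v else 0) \<in> W i" using assms(2) subspace unfolding is_subspace_def by auto
  show "v = (\<Sum>i<n. if i = j then v else 0)" using assms(1) by (simp add: sum.delta)
qed fact

lemma block_proj_mult_vec:
  assumes "j < n"
  shows "block_proj j *v v = block_component v j"
proof -
  define vs where "vs i = (\<Sum>s\<in>UNIV. (v $ s) *s block_component (axis s 1) i)" for i
  have "block_component v j = vs j"
  proof (rule block_component_unique[OF _ _ assms])
    show "\<forall>i<n. vs i \<in> W i"
      unfolding vs_def using block_component_spec subspace unfolding is_subspace_def
      by (auto intro!: subspace_sum)
    have "(\<Sum>i<n. vs i) = (\<Sum>s\<in>UNIV. (v $ s) *s (\<Sum>i<n. block_component (axis s 1) i))"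
      unfolding vs_def scalar_mult_sum by (rule sum.swap)
    also have "\<dots> = (\<Sum>s\<in>UNIV. (v $ s) *s axis s 1)" using block_component_spec by simp
    also have "\<dots> = v" by (rule basis_expansion)
    finally show "v = (\<Sum>i<n. vs i)" by simp
  qed
  then show ?thesis unfolding vs_def block_proj_def
    by (simp add: vec_eq_iff matrix_vector_mult_def sum_component mult.commute)
qed

lemma block_proj_in: "j < n \<Longrightarrow> block_proj j *v v \<in> W j"
  using block_proj_mult_vec block_component_spec by simp

lemma block_proj_on: "j < n \<Longrightarrow> l < n \<Longrightarrow> v \<in> W l \<Longrightarrow> block_proj j *v v = (if j = l then v else 0)"
  using block_proj_mult_vec block_component_of_mem by simp

lemma block_proj_mult:
  "j < n \<Longrightarrow> l < n \<Longrightarrow> block_proj j ** block_proj l = (if j = l then block_proj j else 0)"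
  unfolding matrix_eq using block_proj_on block_proj_in by (auto simp: matrix_vector_mul_assoc[symmetric])

lemma sum_block_proj: "(\<Sum>j<n. block_proj j) = mat 1"
  unfolding matrix_eq sum_matrix_vector_mult using block_proj_mult_vec block_component_spec by simp

lemma sum_mult_block_proj: "(X::'k^'n^'n) = (\<Sum>j<n. X ** block_proj j)"
proof -
  have "X = X ** (\<Sum>j<n. block_proj j)" using sum_block_proj by simp
  then show ?thesis by (simp only: matrix_mult_sum)
qed

lemma matrix_eq_if_mult_block_proj_eq:
  assumes "\<And>j. j < n \<Longrightarrow> (A::'k^'n^'n) ** block_proj j = B ** block_proj j"
  shows "A = B"
  using sum_mult_block_proj[of A] sum_mult_block_proj[of B] assms by simp

lemma preserves_iff_commute: "preserves n W g \<longleftrightarrow> (\<forall>j<n. g ** block_proj j = block_proj j ** g)"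
proof
  assume pres: "preserves n W g"
  show "\<forall>j<n. g ** block_proj j = block_proj j ** g"
  proof (intro allI impI)
    fix j assume j: "j < n"
    have "(block_proj j ** g) *v v = (g ** block_proj j) *v v" for v
    proof -
      have gW: "g *v (block_proj l *v v) \<in> W l" if "l < n" for l
        using pres block_proj_in that unfolding preserves_def by blast
      have "(block_proj j ** g) *v v = block_proj j *v (g *v (\<Sum>l<n. block_proj l *v v))"
        using block_proj_mult_vec block_component_spec by (simp add: matrix_vector_mul_assoc[symmetric])
      also have "\<dots> = (\<Sum>l<n. if j = l then g *v (block_proj l *v v) else 0)"
        unfolding matrix_vector_mult_sum using block_proj_on[OF j] gW by (intro sum.cong refl) auto
      also have "\<dots> = (g ** block_proj j) *v v" using j by (simp add: matrix_vector_mul_assoc)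
      finally show ?thesis .
    qed
    then show "g ** block_proj j = block_proj j ** g" unfolding matrix_eq by simp
  qed
next
  assume comm: "\<forall>j<n. g ** block_proj j = block_proj j ** g"
  show "preserves n W g" unfolding preserves_def
  proof (intro allI impI ballI)
    fix j v assume j: "j < n" and v: "v \<in> W j"
    have "g *v v = g *v (block_proj j *v v)" using block_proj_on[OF j j v] by simp
    also have "\<dots> = block_proj j *v (g *v v)" using comm j by (simp add: matrix_vector_mul_assoc)
    finally show "g *v v \<in> W j" using block_proj_in[OF j, of "g *v v"] by simp
  qed
qed

lemma fixes_block_iff:
  assumes j: "j < n"
  shows "(\<forall>v\<in>W j. g *v v = v) \<longleftrightarrow> g ** block_proj j = block_proj j"
proof
  assume "\<forall>v\<in>W j. g *v v = v"
  then show "g ** block_proj j = block_proj j"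
    unfolding matrix_eq using block_proj_in[OF j] by (simp add: matrix_vector_mul_assoc[symmetric])
next
  assume eq: "g ** block_proj j = block_proj j"
  show "\<forall>v\<in>W j. g *v v = v"
  proof
    fix v assume v: "v \<in> W j"
    have "g *v v = g *v (block_proj j *v v)" using block_proj_on[OF j j v] by simp
    also have "\<dots> = block_proj j *v v" using eq by (simp add: matrix_vector_mul_assoc)
    also have "\<dots> = v" using block_proj_on[OF j j v] by simp
    finally show "g *v v = v" .
  qed
qed

lemma acts_only_on_iff: "acts_only_on n W i g \<longleftrightarrow>
   (\<forall>j<n. g ** block_proj j = block_proj j ** g) \<and> (\<forall>j<n. j \<noteq> i \<longrightarrow> g ** block_proj j = block_proj j)"
  unfolding acts_only_on_def preserves_iff_commute using fixes_block_iff by auto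

definition block_diag :: "(nat \<Rightarrow> 'k^'n^'n) \<Rightarrow> 'k^'n^'n" where
  "block_diag X = (\<Sum>i<n. X i ** block_proj i)"

lemma block_diag_mult:
  assumes "\<And>i j. i < n \<Longrightarrow> j < n \<Longrightarrow> Y i ** block_proj j = block_proj j ** Y i"
  shows "block_diag X ** block_diag Y = block_diag (\<lambda>i. X i ** Y i)"
proof -
  have "X i ** block_proj i ** (Y j ** block_proj j) = (if i = j then X i ** Y i ** block_proj i else 0)"
    if "i < n" "j < n" for i j
  proof -
    have "X i ** block_proj i ** (Y j ** block_proj j) = X i ** (block_proj i ** Y j) ** block_proj j"
      by (simp only: matrix_mul_assoc)
    also have "\<dots> = X i ** (Y j ** block_proj i) ** block_proj j" using assms[OF that(2,1)] by simp
    also have "\<dots> = X i ** Y j ** (block_proj i ** block_proj j)" by (simp only: matrix_mul_assoc)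
    finally show ?thesis using block_proj_mult[OF that] by simp
  qed
  then have "block_diag X ** block_diag Y = (\<Sum>i<n. \<Sum>j<n. if i = j then X i ** Y i ** block_proj i else 0)"
    unfolding block_diag_def by (simp only: sum_matrix_mult matrix_mult_sum) (intro sum.cong refl, simp)
  then show ?thesis unfolding block_diag_def by (simp add: sum.delta)
qed

lemma block_diag_commute:
  assumes "\<And>i. i < n \<Longrightarrow> X i ** Z = Z ** X i" and "\<And>i. i < n \<Longrightarrow> block_proj i ** Z = Z ** block_proj i"
  shows "block_diag X ** Z = Z ** block_diag X"
  unfolding block_diag_def
proof (rule commute_sum)
  fix i assume "i \<in> {..<n}"
  then have "i < n" by simp
  have "X i ** block_proj i ** Z = X i ** (Z ** block_proj i)"
    using assms(2)[OF \<open>i < n\<close>] by (simp add: matrix_mul_assoc[symmetric])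
  also have "\<dots> = Z ** (X i ** block_proj i)"
    using assms(1)[OF \<open>i < n\<close>] by (simp add: matrix_mul_assoc)
  finally show "X i ** block_proj i ** Z = Z ** (X i ** block_proj i)" .
qed

lemma block_diag_mult_block_proj: "i < n \<Longrightarrow> block_diag X ** block_proj i = X i ** block_proj i"
proof -
  assume i: "i < n"
  have "block_diag X ** block_proj i = (\<Sum>j<n. if j = i then X i ** block_proj i else 0)"
    unfolding block_diag_def sum_matrix_mult
    using block_proj_mult[OF _ i] by (intro sum.cong refl) (simp add: matrix_mul_assoc[symmetric])
  then show ?thesis using i by simp
qed

lemma prod_mats_prefix:
  assumes ks: "\<forall>j<n. acts_only_on n W j (ks j)" and "m \<le> n"
  shows "foldl (\<lambda>A i. A ** ks i) (mat 1) [0..<m] =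
    (\<Sum>j<m. ks j ** block_proj j) + (\<Sum>j\<in>{m..<n}. block_proj j)"
  using \<open>m \<le> n\<close>
proof (induct m)
  case 0
  have "{0..<n} = {..<n}" by auto
  then show ?case using sum_block_proj by simp
next
  case (Suc m)
  then have m: "m < n" by simp
  have km: "ks m ** block_proj j = block_proj j ** ks m" "j \<noteq> m \<Longrightarrow> ks m ** block_proj j = block_proj j"
    if "j < n" for j
    using ks m that unfolding acts_only_on_iff by auto
  have "(\<Sum>j<m. ks j ** block_proj j) ** ks m = (\<Sum>j<m. ks j ** block_proj j)"
    unfolding sum_matrix_mult
  proof (intro sum.cong refl)
    fix j assume "j \<in> {..<m}"
    then have j: "j < n" "j \<noteq> m" using m by auto
    have "ks j ** block_proj j ** ks m = ks j ** (ks m ** block_proj j)"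
      using km(1)[OF j(1)] by (simp add: matrix_mul_assoc[symmetric])
    then show "ks j ** block_proj j ** ks m = ks j ** block_proj j" using km(2)[OF j] by simp
  qed
  moreover have "(\<Sum>j\<in>{m..<n}. block_proj j) ** ks m =
      ks m ** block_proj m + (\<Sum>j\<in>{Suc m..<n}. block_proj j)"
  proof -
    have "{m..<n} = insert m {Suc m..<n}" using m by auto
    then have "(\<Sum>j\<in>{m..<n}. block_proj j) ** ks m =
        block_proj m ** ks m + (\<Sum>j\<in>{Suc m..<n}. block_proj j ** ks m)"
      by (simp add: sum_matrix_mult matrix_add_rdistrib)
    also have "(\<Sum>j\<in>{Suc m..<n}. block_proj j ** ks m) = (\<Sum>j\<in>{Suc m..<n}. block_proj j)"
      using km by (intro sum.cong refl) (metis atLeastLessThan_iff not_less_eq_eq order_refl)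
    finally show ?thesis using km(1)[OF m] by simp
  qed
  ultimately show ?case using Suc by (simp add: matrix_add_rdistrib add.assoc)
qed

lemma prod_mats_eq_block_diag:
  assumes "\<forall>j<n. acts_only_on n W j (ks j)"
  shows "prod_mats n ks = block_diag ks"
  using prod_mats_prefix[OF assms order_refl] unfolding prod_mats_def block_diag_def by simp

lemma acts_only_on_one: "acts_only_on n W j (mat 1)"
  unfolding acts_only_on_iff by simp

lemma prod_mats_single:
  assumes "acts_only_on n W i g" and "i < n"
  shows "prod_mats n (\<lambda>j. if j = i then g else mat 1) = g"
proof -
  have ks: "\<forall>j<n. acts_only_on n W j (if j = i then g else mat 1)"
    using assms(1) acts_only_on_one by auto
  show ?thesis unfolding prod_mats_eq_block_diag[OF ks]
  proof (rule matrix_eq_if_mult_block_proj_eq)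
    fix j assume "j < n"
    then show "block_diag (\<lambda>j. if j = i then g else mat 1) ** block_proj j = g ** block_proj j"
      using assms(1) unfolding block_diag_mult_block_proj[OF \<open>j < n\<close>] acts_only_on_iff by auto
  qed
qed

lemma prod_mats_factor:
  assumes ks: "\<forall>j<n. acts_only_on n W j (ks j)" and i: "i < n"
  shows "ks i = prod_mats n ks ** block_proj i + (mat 1 - block_proj i)"
proof (rule matrix_eq_if_mult_block_proj_eq)
  fix j assume j: "j < n"
  have "(prod_mats n ks ** block_proj i + (mat 1 - block_proj i)) ** block_proj j =
      (if j = i then ks i ** block_proj i else block_proj j)"
    unfolding prod_mats_eq_block_diag[OF ks]
    by (simp add: matrix_add_rdistrib matrix_diff_rdistrib block_proj_mult[OF i j]
        matrix_mul_assoc[symmetric] block_diag_mult_block_proj[OF i])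
  then show "ks i ** block_proj j = (prod_mats n ks ** block_proj i + (mat 1 - block_proj i)) ** block_proj j"
    using ks i j unfolding acts_only_on_iff by auto
qed

lemma prod_mats_eq_factor:
  assumes ks: "\<forall>j<n. acts_only_on n W j (ks j)" and i: "i < n"
    and prod: "acts_only_on n W i (prod_mats n ks)"
  shows "prod_mats n ks = ks i"
proof (rule matrix_eq_if_mult_block_proj_eq)
  fix j assume j: "j < n"
  show "prod_mats n ks ** block_proj j = ks i ** block_proj j"
  proof (cases "j = i")
    case True
    then show ?thesis unfolding prod_mats_eq_block_diag[OF ks] by (simp add: block_diag_mult_block_proj[OF i])
  next
    case False
    then show ?thesis using prod ks i j unfolding acts_only_on_iff by auto
  qed
qed

lemma block_diag_sum: "(\<Sum>k\<in>S. block_diag (\<lambda>i. X i k)) = block_diag (\<lambda>i. \<Sum>k\<in>S. X i k)"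
  unfolding block_diag_def sum_matrix_mult by (rule sum.swap)

lemma scale_block_diag: "scale_mat c (block_diag X) = block_diag (\<lambda>i. scale_mat c (X i))"
  unfolding block_diag_def scale_mat_sum by simp

lemma block_diag_one: "block_diag (\<lambda>i. mat 1) = mat 1"
  unfolding block_diag_def using sum_block_proj by simp

lemma weight_curve_block_diag:
  "weight_curve N D (\<lambda>k. block_diag (\<lambda>i. G i k)) a = block_diag (\<lambda>i. weight_curve N D (G i) a)"
  unfolding weight_curve_def scale_block_diag block_diag_sum ..

lemma weight_flag_block_diag:
  "weight_flag D (\<lambda>k. block_diag (\<lambda>i. G i k)) w = block_diag (\<lambda>i. weight_flag D (G i) w)"
  unfolding weight_flag_def block_diag_sum ..

lemma weight_decomp_block_diag:
  assumes dG: "\<And>i. i < n \<Longrightarrow> weight_decomp D (G i)"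
    and comm: "\<And>i j k. i < n \<Longrightarrow> j < n \<Longrightarrow> G i k ** block_proj j = block_proj j ** G i k"
  shows "weight_decomp D (\<lambda>k. block_diag (\<lambda>i. G i k))"
  unfolding weight_decomp_def
proof (intro conjI allI impI)
  fix k assume "D < k"
  then show "block_diag (\<lambda>i. G i k) = 0"
    unfolding block_diag_def using weight_decompD(1)[OF dG] by simp
next
  fix k l
  have "block_diag (\<lambda>i. G i k) ** block_diag (\<lambda>i. G i l) = block_diag (\<lambda>i. G i k ** G i l)"
    using comm by (rule block_diag_mult)
  also have "\<dots> = block_diag (\<lambda>i. if k = l then G i k else 0)"
    unfolding block_diag_def using weight_decompD(2)[OF dG] by (intro sum.cong refl) simp
  finally show "block_diag (\<lambda>i. G i k) ** block_diag (\<lambda>i. G i l) =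
      (if k = l then block_diag (\<lambda>i. G i k) else 0)"
    by (simp add: block_diag_def)
next
  show "(\<Sum>k\<le>D. block_diag (\<lambda>i. G i k)) = mat 1"
    unfolding block_diag_sum using weight_decompD(3)[OF dG] block_diag_one
    by (simp add: block_diag_def)
qed

lemma same_flags_block_diag:
  assumes same: "\<And>i. i < n \<Longrightarrow> same_flags D (C i) (G i)"
    and commC: "\<And>i j k. i < n \<Longrightarrow> j < n \<Longrightarrow> C i k ** block_proj j = block_proj j ** C i k"
    and commG: "\<And>i j k. i < n \<Longrightarrow> j < n \<Longrightarrow> G i k ** block_proj j = block_proj j ** G i k"
  shows "same_flags D (\<lambda>k. block_diag (\<lambda>i. C i k)) (\<lambda>k. block_diag (\<lambda>i. G i k))"
  unfolding same_flags_def weight_flag_block_diag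
proof
  fix w
  let ?FC = "\<lambda>i. weight_flag D (C i) w" and ?FG = "\<lambda>i. weight_flag D (G i) w"
  have "block_diag ?FC ** block_diag ?FG = block_diag (\<lambda>i. ?FC i ** ?FG i)"
    using commG by (intro block_diag_mult weight_flag_commute)
  moreover have "block_diag ?FG ** block_diag ?FC = block_diag (\<lambda>i. ?FG i ** ?FC i)"
    using commC by (intro block_diag_mult weight_flag_commute)
  moreover have "block_diag (\<lambda>i. ?FC i ** ?FG i) = block_diag ?FG"
    and "block_diag (\<lambda>i. ?FG i ** ?FC i) = block_diag ?FC"
    using same unfolding block_diag_def same_flags_def by (auto intro!: sum.cong)
  ultimately show "block_diag ?FC ** block_diag ?FG = block_diag ?FG \<and>
      block_diag ?FG ** block_diag ?FC = block_diag ?FC"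
    by simp
qed

lemma block_diag_restrict_weights:
  assumes "\<And>j k. j < n \<Longrightarrow> C k ** block_proj j = block_proj j ** C k"
  shows "block_diag (\<lambda>i. restrict_weights (block_proj i) N C k) = C k"
proof (rule matrix_eq_if_mult_block_proj_eq)
  fix j assume "j < n"
  then show "block_diag (\<lambda>i. restrict_weights (block_proj i) N C k) ** block_proj j = C k ** block_proj j"
    using block_proj_mult[of j j]
    by (simp add: block_diag_mult_block_proj restrict_weights_mult_proj)
qed

end

section \<open>Groups of block-diagonal matrices\<close>

locale block_group = direct_sum n W
  for n :: nat and W :: "nat \<Rightarrow> ('k::field^'n) set" +
  fixes K :: "('k^'n^'n) set" and Ks :: "nat \<Rightarrow> ('k^'n^'n) set"
  assumes infinite_field: "infinite (UNIV :: 'k set)"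
    and closed_subgroup: "closed_subgroup K"
    and K_preserves: "\<forall>g\<in>K. preserves n W g"
    and factors: "\<forall>i<n. is_subgroup (Ks i) \<and> (\<forall>g\<in>Ks i. acts_only_on n W i g)"
    and K_eq_prod: "K = {prod_mats n ks | ks. \<forall>i<n. ks i \<in> Ks i}"
begin

lemma K_subgroup: "is_subgroup K"
  using closed_subgroup unfolding closed_subgroup_def by simp

lemma K_subset_GL: "K \<subseteq> GL"
  using K_subgroup unfolding is_subgroup_def by simp

lemma K_commute_block_proj: "g \<in> K \<Longrightarrow> j < n \<Longrightarrow> g ** block_proj j = block_proj j ** g"
  using K_preserves preserves_iff_commute by simp

lemma factor_acts_only_on: "i < n \<Longrightarrow> g \<in> Ks i \<Longrightarrow> acts_only_on n W i g"
  using factors by simp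

lemma prod_mats_mem_K: "\<forall>i<n. ks i \<in> Ks i \<Longrightarrow> prod_mats n ks \<in> K"
  unfolding K_eq_prod by blast

lemma K_mult: "g \<in> K \<Longrightarrow> h \<in> K \<Longrightarrow> g ** h \<in> K"
  using K_subgroup unfolding is_subgroup_def by simp

lemma K_matrix_inv: "g \<in> K \<Longrightarrow> matrix_inv g \<in> K"
  using K_subgroup unfolding is_subgroup_def by simp

lemma factor_subset_K:
  assumes "i < n"
  shows "Ks i \<subseteq> K"
proof
  fix g assume g: "g \<in> Ks i"
  have "\<forall>j<n. (if j = i then g else mat 1) \<in> Ks j"
    using g factors unfolding is_subgroup_def by auto
  then have "prod_mats n (\<lambda>j. if j = i then g else mat 1) \<in> K" by (rule prod_mats_mem_K)
  then show "g \<in> K" using prod_mats_single[OF factor_acts_only_on[OF assms g] assms] by simp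
qed

lemma mem_factor_iff:
  assumes i: "i < n"
  shows "g \<in> Ks i \<longleftrightarrow> g \<in> K \<and> acts_only_on n W i g"
proof
  assume g: "g \<in> K \<and> acts_only_on n W i g"
  then obtain ks where ks: "g = prod_mats n ks" "\<forall>j<n. ks j \<in> Ks j" unfolding K_eq_prod by blast
  then have "g = ks i" using prod_mats_eq_factor factor_acts_only_on i g by simp
  then show "g \<in> Ks i" using ks(2) i by simp
next
  assume "g \<in> Ks i"
  then show "g \<in> K \<and> acts_only_on n W i g" using factor_subset_K[OF i] factor_acts_only_on[OF i] by auto
qed

lemma restrict_mem_factor:
  assumes "g \<in> K" and "i < n"
  shows "g ** block_proj i + (mat 1 - block_proj i) \<in> Ks i"
proof -
  obtain ks where ks: "g = prod_mats n ks" "\<forall>j<n. ks j \<in> Ks j"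
    using assms(1) unfolding K_eq_prod by blast
  then have "ks i = g ** block_proj i + (mat 1 - block_proj i)"
    using prod_mats_factor factor_acts_only_on assms(2) by simp
  moreover have "ks i \<in> Ks i" using ks(2) assms(2) by simp
  ultimately show ?thesis by simp
qed

lemma weight_curve_in_K_commute:
  assumes "weight_decomp D C" and "\<And>a. a \<noteq> 0 \<Longrightarrow> weight_curve N D C a \<in> K" and "j < n"
  shows "C k ** block_proj j = block_proj j ** C k"
proof (rule weight_decomp_commute[OF infinite_field assms(1)])
  fix a :: 'k assume "a \<noteq> 0"
  then show "weight_curve N D C a ** block_proj j = block_proj j ** weight_curve N D C a"
    using assms(2,3) K_commute_block_proj by simp
qed

lemma averaged_curve_in_factor:
  assumes i: "i < n"
    and dc: "weight_decomp D C" and C_Ks: "\<And>a. a \<noteq> 0 \<Longrightarrow> weight_curve N D C a \<in> Ks i"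
    and de: "weight_decomp D' E" and E_K: "\<And>a. a \<noteq> 0 \<Longrightarrow> weight_curve N' D' E a \<in> K"
    and P_eq: "P_of (weight_curve N D C) = P_of (weight_curve N' D' E)"
    and "a \<noteq> 0"
  shows "weight_curve N D (\<lambda>k. weight_part D' E (C k)) a \<in> Ks i"
proof -
  obtain Z where Z: "zariski_closed Z" and K_eq: "K = GL \<inter> Z"
    using closed_subgroup unfolding closed_subgroup_def closed_in_GL_def by blast
  note avg = averaged_cocharacter[OF infinite_field dc de P_eq]
  have conj: "weight_curve N' D' E b ** weight_curve N D C a' ** matrix_inv (weight_curve N' D' E b) \<in> Z"
    if "a' \<noteq> 0" "b \<noteq> 0" for a' b
  proof -
    have "weight_curve N D C a' \<in> K" using C_Ks[OF that(1)] factor_subset_K[OF i] by blast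
    then have "weight_curve N' D' E b ** weight_curve N D C a' ** matrix_inv (weight_curve N' D' E b) \<in> K"
      using E_K[OF that(2)] by (intro K_mult K_matrix_inv)
    then show ?thesis using K_eq by simp
  qed
  have "weight_curve N D (\<lambda>k. weight_part D' E (C k)) a \<in> Z"
    by (rule avg(4)[OF Z conj \<open>a \<noteq> 0\<close>])
  then have "weight_curve N D (\<lambda>k. weight_part D' E (C k)) a \<in> K"
    using weight_curve_in_GL[OF avg(1) \<open>a \<noteq> 0\<close>] K_eq by simp
  moreover have "acts_only_on n W i (weight_part D' E (weight_curve N D C a))"
    unfolding acts_only_on_iff
  proof (intro conjI allI impI)
    fix j assume j: "j < n"
    have E_comm: "E m ** block_proj j = block_proj j ** E m" for m
      by (rule weight_curve_in_K_commute[OF de E_K j])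
    have "acts_only_on n W i (weight_curve N D C a)" using C_Ks[OF \<open>a \<noteq> 0\<close>] i by (simp add: factor_acts_only_on)
    then have C_comm: "weight_curve N D C a ** block_proj j = block_proj j ** weight_curve N D C a"
      and C_fix: "j \<noteq> i \<Longrightarrow> weight_curve N D C a ** block_proj j = block_proj j"
      using j unfolding acts_only_on_iff by auto
    show "weight_part D' E (weight_curve N D C a) ** block_proj j =
        block_proj j ** weight_part D' E (weight_curve N D C a)"
      using E_comm C_comm by (rule weight_part_commute)
    show "weight_part D' E (weight_curve N D C a) ** block_proj j = block_proj j" if "j \<noteq> i"
      using de E_comm C_fix[OF that] by (rule weight_part_mult_fixed)
  qed
  ultimately show ?thesis using i by (simp add: mem_factor_iff weight_curve_weight_part)
qed

lemma averaged_factor_decomp: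
  assumes i: "i < n" and dc: "weight_decomp D C"
    and C_Ks: "\<And>a. a \<noteq> 0 \<Longrightarrow> weight_curve N D C a \<in> Ks i"
    and mu: "cocharacter K mu" and P_eq: "P_of (weight_curve N D C) = P_of mu" and "H \<subseteq> L_of mu"
  shows "\<exists>G. weight_decomp D G \<and> same_flags D C G \<and> (\<forall>a. a \<noteq> 0 \<longrightarrow> weight_curve N D G a \<in> Ks i)
    \<and> (\<forall>h\<in>H. \<forall>k. G k ** h = h ** G k)"
proof -
  from cocharacter_weight_decomp[OF infinite_field mu K_subset_GL] obtain N' D' E
    where de: "weight_decomp D' E" and mu_E: "\<forall>a. a \<noteq> 0 \<longrightarrow> mu a = weight_curve N' D' E a"
    by blast
  have E_K: "weight_curve N' D' E a \<in> K" if "a \<noteq> 0" for a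
    using mu mu_E that unfolding cocharacter_def by auto
  have P_eq': "P_of (weight_curve N D C) = P_of (weight_curve N' D' E)"
    using P_eq P_of_cong[of mu "weight_curve N' D' E"] mu_E by simp
  have H_L: "H \<subseteq> L_of (weight_curve N' D' E)"
    using \<open>H \<subseteq> L_of mu\<close> L_of_cong[of mu "weight_curve N' D' E"] mu_E by simp
  have same: "nonneg_weights C Y \<longleftrightarrow> nonneg_weights E Y" for Y
    by (rule nonneg_weights_eq_if_P_of_eq[OF infinite_field dc de P_eq'])
  note avg = averaged_weight_decomp[OF dc de same]
  have "\<forall>h\<in>H. \<forall>k. weight_part D' E (C k) ** h = h ** weight_part D' E (C k)"
    using H_L unfolding L_of_weight_curve[OF infinite_field de] by (auto intro: avg(2))
  moreover have "\<forall>a. a \<noteq> 0 \<longrightarrow> weight_curve N D (\<lambda>k. weight_part D' E (C k)) a \<in> Ks i"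
    using averaged_curve_in_factor[OF i dc C_Ks de E_K P_eq'] by blast
  ultimately show ?thesis using avg(1) averaged_same_flags[OF dc de same] by blast
qed

lemma rel_Gcr_factor:
  assumes "rel_Gcr H K" and "H \<subseteq> GL" and i: "i < n"
  shows "rel_Gcr H (Ks i)"
  unfolding rel_Gcr_def
proof (intro allI impI, elim conjE)
  fix lam assume lam: "cocharacter (Ks i) lam" and H_P: "H \<subseteq> P_of lam"
  from cocharacter_weight_decomp[OF infinite_field lam order_trans[OF factor_subset_K[OF i] K_subset_GL]]
  obtain N D C where dc: "weight_decomp D C" and lam_C: "\<forall>a. a \<noteq> 0 \<longrightarrow> lam a = weight_curve N D C a"
    by blast
  have P_lam: "P_of lam = P_of (weight_curve N D C)" using P_of_cong lam_C by blast
  have C_Ks: "weight_curve N D C a \<in> Ks i" if "a \<noteq> 0" for a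
    using lam lam_C that unfolding cocharacter_def by auto
  obtain mu where mu: "cocharacter K mu" "P_of lam = P_of mu" "H \<subseteq> L_of mu"
    using assms(1) cocharacter_mono[OF lam factor_subset_K[OF i]] H_P unfolding rel_Gcr_def by blast
  then obtain G where dG: "weight_decomp D G" and same: "same_flags D C G"
    and G_Ks: "\<forall>a. a \<noteq> 0 \<longrightarrow> weight_curve N D G a \<in> Ks i" and G_H: "\<forall>h\<in>H. \<forall>k. G k ** h = h ** G k"
    using averaged_factor_decomp[OF i dc C_Ks] P_lam by metis
  show "\<exists>mu. cocharacter (Ks i) mu \<and> P_of lam = P_of mu \<and> H \<subseteq> L_of mu"
  proof (intro exI conjI)
    show "cocharacter (Ks i) (weight_curve N D G)" using G_Ks by (simp add: cocharacter_weight_curve_iff[OF dG])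
    show "P_of lam = P_of (weight_curve N D G)"
      unfolding P_lam P_of_weight_curve[OF infinite_field dc] P_of_weight_curve[OF infinite_field dG]
      using nonneg_weights_eq_if_same_flags[OF dc dG same] by simp
    show "H \<subseteq> L_of (weight_curve N D G)"
      unfolding L_of_weight_curve[OF infinite_field dG] using G_H \<open>H \<subseteq> GL\<close> by auto
  qed
qed

lemma restricted_averaged_decomp:
  assumes "rel_Gcr H (Ks i)" and i: "i < n"
    and H_comm: "\<forall>h\<in>H. h ** block_proj i = block_proj i ** h"
    and dc: "weight_decomp D C" and "N \<le> D" and C_K: "\<And>a. a \<noteq> 0 \<Longrightarrow> weight_curve N D C a \<in> K"
    and H_P: "H \<subseteq> P_of (weight_curve N D C)"
  shows "\<exists>G. weight_decomp D G \<and> same_flags D (restrict_weights (block_proj i) N C) G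
    \<and> (\<forall>a. a \<noteq> 0 \<longrightarrow> weight_curve N D G a \<in> Ks i) \<and> (\<forall>h\<in>H. \<forall>k. G k ** h = h ** G k)"
proof -
  let ?C = "restrict_weights (block_proj i) N C"
  have idem: "block_proj i ** block_proj i = block_proj i" using block_proj_mult[OF i i] by simp
  have C_comm: "C k ** block_proj i = block_proj i ** C k" for k
    by (rule weight_curve_in_K_commute[OF dc C_K i])
  have dC: "weight_decomp D ?C"
    by (rule weight_decomp_restrict_weights[OF dc \<open>N \<le> D\<close> idem C_comm])
  have C_Ks: "weight_curve N D ?C a \<in> Ks i" if "a \<noteq> 0" for a
    using weight_curve_restrict_weights[OF dc \<open>N \<le> D\<close> idem C_comm that]
      restrict_mem_factor[OF C_K[OF that] i] by simp
  have "H \<subseteq> P_of (weight_curve N D ?C)"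
    using H_P H_comm nonneg_weights_restrict_weights[OF dc \<open>N \<le> D\<close> idem C_comm]
    unfolding P_of_weight_curve[OF infinite_field dc] P_of_weight_curve[OF infinite_field dC] by blast
  moreover have "cocharacter (Ks i) (weight_curve N D ?C)"
    using C_Ks by (simp add: cocharacter_weight_curve_iff[OF dC])
  ultimately obtain mu where mu: "cocharacter (Ks i) mu" "P_of (weight_curve N D ?C) = P_of mu" "H \<subseteq> L_of mu"
    using assms(1) unfolding rel_Gcr_def by blast
  show ?thesis
    by (rule averaged_factor_decomp[OF i dC C_Ks cocharacter_mono[OF mu(1) factor_subset_K[OF i]] mu(2,3)])
qed

lemma glued_weight_decomp:
  assumes dc: "weight_decomp D C" and C_K: "\<And>a. a \<noteq> 0 \<Longrightarrow> weight_curve N D C a \<in> K"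
    and dGs: "\<And>i. i < n \<Longrightarrow> weight_decomp D (Gs i)"
    and same_i: "\<And>i. i < n \<Longrightarrow> same_flags D (restrict_weights (block_proj i) N C) (Gs i)"
    and Gs_Ks: "\<And>i a. i < n \<Longrightarrow> a \<noteq> 0 \<Longrightarrow> weight_curve N D (Gs i) a \<in> Ks i"
  defines "G \<equiv> \<lambda>k. block_diag (\<lambda>i. Gs i k)"
  shows "weight_decomp D G" and "same_flags D C G" and "a \<noteq> 0 \<Longrightarrow> weight_curve N D G a \<in> K"
proof -
  have C_comm: "C k ** block_proj j = block_proj j ** C k" if "j < n" for j k
    by (rule weight_curve_in_K_commute[OF dc C_K that])
  have Gs_comm: "Gs i k ** block_proj j = block_proj j ** Gs i k" if i: "i < n" and j: "j < n" for i j k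
  proof -
    have "weight_curve N D (Gs i) a \<in> K" if "a \<noteq> 0" for a
      using Gs_Ks[OF i that] factor_subset_K[OF i] by blast
    then show ?thesis by (rule weight_curve_in_K_commute[OF dGs[OF i] _ j])
  qed
  show dG: "weight_decomp D G"
    unfolding G_def using dGs Gs_comm by (rule weight_decomp_block_diag)
  have "same_flags D (\<lambda>k. block_diag (\<lambda>i. restrict_weights (block_proj i) N C k)) G"
    unfolding G_def
  proof (rule same_flags_block_diag)
    show "restrict_weights (block_proj i) N C k ** block_proj j = block_proj j ** restrict_weights (block_proj i) N C k"
      if "i < n" "j < n" for i j k
      using C_comm[OF that(2)] block_proj_mult[OF that] block_proj_mult[OF that(2,1)]
      by (intro restrict_weights_commute) auto
  qed (use same_i Gs_comm in auto)
  moreover have "(\<lambda>k. block_diag (\<lambda>i. restrict_weights (block_proj i) N C k)) = C"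
    by (intro ext block_diag_restrict_weights C_comm)
  ultimately show "same_flags D C G" by simp
  assume "a \<noteq> 0"
  have "weight_curve N D G a = block_diag (\<lambda>i. weight_curve N D (Gs i) a)"
    unfolding G_def by (rule weight_curve_block_diag)
  also have "\<dots> = prod_mats n (\<lambda>i. weight_curve N D (Gs i) a)"
    using Gs_Ks[OF _ \<open>a \<noteq> 0\<close>] factor_acts_only_on by (intro prod_mats_eq_block_diag[symmetric]) auto
  finally show "weight_curve N D G a \<in> K" using Gs_Ks[OF _ \<open>a \<noteq> 0\<close>] by (simp add: prod_mats_mem_K)
qed

lemma rel_Gcr_of_factors:
  assumes factors_Gcr: "\<forall>i<n. rel_Gcr H (Ks i)" and "H \<subseteq> GL" and H_pres: "\<forall>h\<in>H. preserves n W h"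
  shows "rel_Gcr H K"
  unfolding rel_Gcr_def
proof (intro allI impI, elim conjE)
  fix lam assume lam: "cocharacter K lam" and H_P: "H \<subseteq> P_of lam"
  from cocharacter_weight_decomp[OF infinite_field lam K_subset_GL]
  obtain N D C where dc: "weight_decomp D C" and "N \<le> D"
    and lam_C: "\<forall>a. a \<noteq> 0 \<longrightarrow> lam a = weight_curve N D C a"
    by blast
  have P_lam: "P_of lam = P_of (weight_curve N D C)" using P_of_cong lam_C by blast
  have C_K: "weight_curve N D C a \<in> K" if "a \<noteq> 0" for a
    using lam lam_C that unfolding cocharacter_def by auto
  have H_comm: "h ** block_proj j = block_proj j ** h" if "h \<in> H" "j < n" for h j
    using H_pres that by (simp add: preserves_iff_commute)
  have "\<forall>i\<in>{..<n}. \<exists>G. weight_decomp D G \<and> same_flags D (restrict_weights (block_proj i) N C) G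
      \<and> (\<forall>a. a \<noteq> 0 \<longrightarrow> weight_curve N D G a \<in> Ks i) \<and> (\<forall>h\<in>H. \<forall>k. G k ** h = h ** G k)"
    using factors_Gcr H_comm H_P P_lam
    by (auto intro!: restricted_averaged_decomp[OF _ _ _ dc \<open>N \<le> D\<close> C_K])
  from bchoice[OF this] obtain Gs where Gs: "\<forall>i\<in>{..<n}. weight_decomp D (Gs i)
      \<and> same_flags D (restrict_weights (block_proj i) N C) (Gs i)
      \<and> (\<forall>a. a \<noteq> 0 \<longrightarrow> weight_curve N D (Gs i) a \<in> Ks i) \<and> (\<forall>h\<in>H. \<forall>k. Gs i k ** h = h ** Gs i k)"
    by (rule exE)
  define G where "G k = block_diag (\<lambda>i. Gs i k)" for k
  note glued = glued_weight_decomp[OF dc C_K, of Gs, folded G_def]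
  show "\<exists>mu. cocharacter K mu \<and> P_of lam = P_of mu \<and> H \<subseteq> L_of mu"
  proof (intro exI conjI)
    have dG: "weight_decomp D G" and same: "same_flags D C G"
      and G_K: "\<And>a. a \<noteq> 0 \<Longrightarrow> weight_curve N D G a \<in> K"
      using glued Gs by simp_all
    show "cocharacter K (weight_curve N D G)" using G_K by (simp add: cocharacter_weight_curve_iff[OF dG])
    show "P_of lam = P_of (weight_curve N D G)"
      unfolding P_lam P_of_weight_curve[OF infinite_field dc] P_of_weight_curve[OF infinite_field dG]
      using nonneg_weights_eq_if_same_flags[OF dc dG same] by simp
    have "G k ** h = h ** G k" if "h \<in> H" for h k
      unfolding G_def using Gs H_comm[OF that] that by (intro block_diag_commute) auto
    then show "H \<subseteq> L_of (weight_curve N D G)"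
      unfolding L_of_weight_curve[OF infinite_field dG] using \<open>H \<subseteq> GL\<close> by auto
  qed
qed

end

theorem corollary4p7:
  fixes n :: nat
    and W :: "nat \<Rightarrow> ('k::field^'n) set"
    and H K :: "('k^'n^'n) set"
    and Ks :: "nat \<Rightarrow> ('k^'n^'n) set"
  assumes "alg_closed_field TYPE('k)"
    and "direct_sum_decomp n W"
    and "is_subgroup H" and "\<forall>h\<in>H. preserves n W h"
    and "reductive K" and "\<forall>g\<in>K. preserves n W g"
    and "\<forall>i<n. is_subgroup (Ks i) \<and> (\<forall>g\<in>Ks i. acts_only_on n W i g)"
    and "K = {prod_mats n ks | ks. \<forall>i<n. ks i \<in> Ks i}"
  shows "rel_Gcr H K \<longleftrightarrow> (\<forall>i<n. rel_Gcr H (Ks i))"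
proof -
  interpret block_group n W K Ks
  proof
    show "infinite (UNIV :: 'k set)" using assms(1) by (rule alg_closed_field_infinite)
    show "closed_subgroup K" using assms(5) unfolding reductive_def by simp
  qed (use assms in simp_all)
  have "H \<subseteq> GL" using assms(3) unfolding is_subgroup_def by simp
  then show ?thesis using rel_Gcr_factor rel_Gcr_of_factors assms(4) by blast
qed

end
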